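(* Consider the gossip algorithm described in the context, under the standing assumptions stated there. Let $Z(k)=H\bar H\tilde x(k)$ and $\bar x(k)=W(k)\tilde x(k)$. Then $$\sum_{k=0}^{\infty}\mathbb{E}\big[\|\bar x(k)-Z(k)\|^2\,\big|\,\mathcal M_k\big]<\infty\quad\text{almost surely},$$ where $\mathcal M_k$ is the $\sigma$-field generated by the initial estimates $\tilde x^i(0)$, $i\in V$, and the pairs $(i_l,j_l)$, $1\le l\le k-1$.
   Context: Graphs and matrices. Let $V=\{1,\ldots,N\}$, $N\ge2$, and let $G_I=(V,E_I)$ (interference graph) be a connected undirected graph which is not complete, with adjacency matrix $A$; $B=A+I_N$. For $i\in V$: $N_I(i)$ is the neighbor set of $i$ in $G_I$, $\tilde N_I(i)=N_I(i)\cup\{i\}$, $m_i=\deg_{G_I}(i)+1$; $m=\sum_i m_i$. For $i,j\in V$: $s_{ij}=\sum_{l=1}^{j}B(i,l)+\sum_{r=1}^{i-1}m_r$; $E_j^i=e_{s_{ij}}\in\mathbb{R}^m$ if $j\in\tilde N_I(i)$, $E_j^i=\mathbf 0_m$ otherwise ($e_1,\dots,e_m$ standard basis of $\mathbb{R}^m$). $H=[\sum_iE_1^i,\ldots,\sum_iE_N^i]\in\mathbb{R}^{m\times N}$, $\bar H=\mathrm{diag}(1/m_1,\ldots,1/m_N)H^T$. The communication graph $G_C=(V,E_C)$ satisfies $G_m\subseteq G_C\subseteq G_I$ for a maximal triangle-free spanning subgraph $G_m$ of $G_I$ (triangle-free, spanning, and adding any edge of $G_I$ not in $G_m$ creates a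 triangle); $N_C(i)$ is the neighbor set of $i$ in $G_C$. $\mathrm{ind}(i,j)=\tilde N_I(i)\cap\tilde N_I(j)$ and $W_{ij}=I_m-\tfrac12\sum_{l\in\mathrm{ind}(i,j)}(E_l^i-E_l^j)(E_l^i-E_l^j)^T$. Game. Player $i$ has action set $\Omega_i\subset\mathbb{R}$, nonempty, compact and convex, and cost $J_i:\Omega^i\to\mathbb{R}$, $\Omega^i=\prod_{j\in\tilde N_I(i)}\Omega_j$, written $J_i(x_i,x_{-i}^i)$; $J_i$ is continuously differentiable in $x_i$, jointly continuous in $x^i$, and convex in $x_i$ for every $x_{-i}^i$. $T_{\Omega_i}$ denotes Euclidean projection onto $\Omega_i$. Algorithm. The state is $\tilde x(k)\in\mathbb{R}^m$, whose entry at position $s_{ij}$ ($i\in V$, $j\in\tilde N_I(i)$) is $\tilde x_j^i(k)\in\Omega_j$; the actions are $x_i(k)=\tilde x_i^i(k)$. Initial values $\tilde x^i(0)\in\Omega^i$ are arbitrary. At iteration $k$: $i_k$ is drawn uniformly from $V$ and $j_k$ uniformly from $N_C(i_k)$, independently of the past; $W(k)=W_{i_kj_k}$; $\bar x(k)=W(k)\tilde x(k)$; $\hat x_{-i}^i(k)=(\bar x_{s_{ij}}(k))_{j\in N_I(i)}$; for $i\in\{i_k,j_k\}$, $x_i(k+1)=T_{\Omega_i}[x_i(k)-\alpha_{k,i}\nabla_{x_i}J_i(x_i(k),\hat x_{-i}^i(k))]$, and $x_i(k+1)=x_i(k)$ otherwise; then $\tilde x_j^i(k+1)=\bar x_{s_{ij}}(k)$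 for $j\in N_I(i)$ and $\tilde x_i^i(k+1)=x_i(k+1)$. The step sizes are $\alpha_{k,i}=1/\nu_k(i)$, where $\nu_k(i)$ is the number of updates player $i$ has made up to time $k$; they satisfy $\sum_k\alpha_{k,i}^2<\infty$ and $\sum_k\alpha_{k,i}=\infty$ for all $i$. *)

theory Defs
  imports "HOL-Probability.Probability"
begin

(* Vectors of R^m are functions nat => real, meaningful on positions 1..m;
   matrices are functions nat => nat => real (row, column). *)

definition simple_graph :: "nat \<Rightarrow> (nat \<times> nat) set \<Rightarrow> bool" where
  "simple_graph N E \<longleftrightarrow> E \<subseteq> {1..N} \<times> {1..N} \<and> sym E \<and> (\<forall>i. (i,i) \<notin> E)"

definition graph_connected :: "nat \<Rightarrow> (nat \<times> nat) set \<Rightarrow> bool" where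
  "graph_connected N E \<longleftrightarrow> (\<forall>i\<in>{1..N}. \<forall>j\<in>{1..N}. (i,j) \<in> E\<^sup>*)"

definition graph_complete :: "nat \<Rightarrow> (nat \<times> nat) set \<Rightarrow> bool" where
  "graph_complete N E \<longleftrightarrow> (\<forall>i\<in>{1..N}. \<forall>j\<in>{1..N}. i \<noteq> j \<longrightarrow> (i,j) \<in> E)"

definition triangle_free :: "(nat \<times> nat) set \<Rightarrow> bool" where
  "triangle_free E \<longleftrightarrow> \<not> (\<exists>a b c. (a,b) \<in> E \<and> (b,c) \<in> E \<and> (a,c) \<in> E)"

definition max_tri_free_spanning :: "nat \<Rightarrow> (nat \<times> nat) set \<Rightarrow> (nat \<times> nat) set \<Rightarrow> bool" where
  "max_tri_free_spanning N EI Em \<longleftrightarrow>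
     simple_graph N Em \<and> Em \<subseteq> EI \<and> triangle_free Em \<and>
     (\<forall>(a,b)\<in>EI - Em. \<not> triangle_free (Em \<union> {(a,b),(b,a)}))"

definition NI :: "nat \<Rightarrow> (nat \<times> nat) set \<Rightarrow> nat \<Rightarrow> nat set" where
  "NI N E i = {j\<in>{1..N}. (i,j) \<in> E}"

definition NtI :: "nat \<Rightarrow> (nat \<times> nat) set \<Rightarrow> nat \<Rightarrow> nat set" where
  "NtI N E i = insert i (NI N E i)"

definition mi :: "nat \<Rightarrow> (nat \<times> nat) set \<Rightarrow> nat \<Rightarrow> nat" where
  "mi N E i = card (NI N E i) + 1"

definition mtot :: "nat \<Rightarrow> (nat \<times> nat) set \<Rightarrow> nat" where
  "mtot N E = (\<Sum>i=1..N. mi N E i)"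

definition Bmat :: "nat \<Rightarrow> (nat \<times> nat) set \<Rightarrow> nat \<Rightarrow> nat \<Rightarrow> nat" where
  "Bmat N E i l = (if l \<in> NtI N E i then 1 else 0)"

definition spos :: "nat \<Rightarrow> (nat \<times> nat) set \<Rightarrow> nat \<Rightarrow> nat \<Rightarrow> nat" where
  "spos N E i j = (\<Sum>l=1..j. Bmat N E i l) + (\<Sum>r=1..i-1. mi N E r)"

definition unitv :: "nat \<Rightarrow> nat \<Rightarrow> real" where
  "unitv p = (\<lambda>q. if q = p then 1 else 0)"

definition Evec :: "nat \<Rightarrow> (nat \<times> nat) set \<Rightarrow> nat \<Rightarrow> nat \<Rightarrow> nat \<Rightarrow> real" where
  "Evec N E i j = (if j \<in> NtI N E i then unitv (spos N E i j) else (\<lambda>_. 0))"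

definition Hmat :: "nat \<Rightarrow> (nat \<times> nat) set \<Rightarrow> nat \<Rightarrow> nat \<Rightarrow> real" where
  "Hmat N E p j = (\<Sum>i=1..N. Evec N E i j p)"

definition Hbar :: "nat \<Rightarrow> (nat \<times> nat) set \<Rightarrow> nat \<Rightarrow> nat \<Rightarrow> real" where
  "Hbar N E j p = Hmat N E p j / real (mi N E j)"

definition ind :: "nat \<Rightarrow> (nat \<times> nat) set \<Rightarrow> nat \<Rightarrow> nat \<Rightarrow> nat set" where
  "ind N E i j = NtI N E i \<inter> NtI N E j"

definition Wmat :: "nat \<Rightarrow> (nat \<times> nat) set \<Rightarrow> nat \<Rightarrow> nat \<Rightarrow> nat \<Rightarrow> nat \<Rightarrow> real" where
  "Wmat N E i j p q = (if p = q then 1 else 0)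
     - 1/2 * (\<Sum>l\<in>ind N E i j. (Evec N E i l p - Evec N E j l p) * (Evec N E i l q - Evec N E j l q))"

definition mulv :: "nat \<Rightarrow> (nat \<Rightarrow> nat \<Rightarrow> real) \<Rightarrow> (nat \<Rightarrow> real) \<Rightarrow> nat \<Rightarrow> real" where
  "mulv n A x = (\<lambda>p. \<Sum>q=1..n. A p q * x q)"

definition normsq :: "nat \<Rightarrow> (nat \<Rightarrow> real) \<Rightarrow> real" where
  "normsq n v = (\<Sum>p=1..n. (v p)^2)"

definition Omega_loc :: "nat \<Rightarrow> (nat \<times> nat) set \<Rightarrow> (nat \<Rightarrow> real set) \<Rightarrow> nat \<Rightarrow> (nat \<Rightarrow> real) set" where
  "Omega_loc N E Om i = {y. (\<forall>j\<in>NtI N E i. y j \<in> Om j) \<and> (\<forall>j. j \<notin> NtI N E i \<longrightarrow> y j = 0)}"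

text \<open>One iteration: given the drawn pair (a,b), step sizes alpha and the state xt,
  produce the next state. grad i y is the partial gradient of J_i w.r.t. x_i at the
  local profile y.\<close>
definition gstep :: "nat \<Rightarrow> (nat \<times> nat) set \<Rightarrow> (nat \<Rightarrow> real set) \<Rightarrow> (nat \<Rightarrow> (nat \<Rightarrow> real) \<Rightarrow> real)
    \<Rightarrow> (nat \<Rightarrow> real) \<Rightarrow> nat \<times> nat \<Rightarrow> (nat \<Rightarrow> real) \<Rightarrow> nat \<Rightarrow> real" where
  "gstep N E Om grad alpha ab xt =
     (let a = fst ab; b = snd ab;
          xb = mulv (mtot N E) (Wmat N E a b) xt
      in (\<lambda>p. if \<exists>i\<in>{1..N}. p = spos N E i i then
                 (let i = (THE i. i \<in> {1..N} \<and> p = spos N E i i) in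
                  if i = a \<or> i = b then
                    closest_point (Om i)
                      (xt p - alpha i * grad i (\<lambda>j. if j = i then xt p
                                                 else if j \<in> NI N E i then xb (spos N E i j) else 0))
                  else xt p)
               else xb p))"

definition nu :: "(nat \<Rightarrow> nat \<times> nat) \<Rightarrow> nat \<Rightarrow> nat \<Rightarrow> nat" where
  "nu \<omega> k i = card {l\<in>{..k}. fst (\<omega> l) = i \<or> snd (\<omega> l) = i}"

text \<open>The state tilde x(k) along the sequence of drawn pairs omega (omega k = (i_k, j_k)).\<close>
primrec gstate :: "nat \<Rightarrow> (nat \<times> nat) set \<Rightarrow> (nat \<Rightarrow> real set) \<Rightarrow> (nat \<Rightarrow> (nat \<Rightarrow> real) \<Rightarrow> real)
    \<Rightarrow> (nat \<Rightarrow> real) \<Rightarrow> (nat \<Rightarrow> nat \<times> nat) \<Rightarrow> nat \<Rightarrow> nat \<Rightarrow> real" where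
  "gstate N E Om grad x0 \<omega> 0 = x0"
| "gstate N E Om grad x0 \<omega> (Suc k) =
     gstep N E Om grad (\<lambda>i. 1 / real (nu \<omega> k i)) (\<omega> k) (gstate N E Om grad x0 \<omega> k)"

definition pair_pmf :: "nat \<Rightarrow> (nat \<times> nat) set \<Rightarrow> (nat \<times> nat) pmf" where
  "pair_pmf N EC = pmf_of_set {1..N} \<bind> (\<lambda>i. map_pmf (\<lambda>j. (i,j)) (pmf_of_set (NI N EC i)))"

definition pairs_space :: "nat \<Rightarrow> (nat \<times> nat) set \<Rightarrow> (nat \<Rightarrow> nat \<times> nat) measure" where
  "pairs_space N EC = (\<Pi>\<^sub>M k\<in>(UNIV::nat set). measure_pmf (pair_pmf N EC))"

text \<open>M_k: sigma-field generated by the (deterministic) initial estimates and the pairs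
  drawn at the iterations before k.\<close>
definition Mfield :: "nat \<Rightarrow> (nat \<times> nat) set \<Rightarrow> nat \<Rightarrow> (nat \<Rightarrow> nat \<times> nat) measure" where
  "Mfield N EC k = sigma (space (pairs_space N EC))
     {(\<lambda>\<omega>. \<omega> l) -` A \<inter> space (pairs_space N EC) | l A. l < k}"

end

(* Write \<Phi>(x) = \<Sum>_i \<Sum>_{j \<in> N_I(i)} (x_j^i - x_j^j)^2 for the disagreement between the
   estimates and the actual actions. Each entry of W(k) x(k) - H Hbar x(k) is a difference of two
   averages of estimates of one action, so \<parallel>W(k) x(k) - Z(k)\<parallel>^2 \<le> 4 m \<Phi>(x(k)). Averaging along a
   communication edge (a,b) removes at least half of \<Sum>_l (x_l^a - x_l^b)^2 from \<Phi>; since every interference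
   edge outside G_C closes a triangle with two edges of G_m \<subseteq> G_C, a uniformly drawn edge removes
   in expectation at least \<rho> \<Phi> with \<rho> = 1/(8 N^4). The projected gradient steps move \<Phi> by at
   most a constant times the squared step sizes, and along every sample path these sum to at most
   N \<pi>^2/6, each player's step sizes being 1, 1/2, 1/3, ... . So E \<Phi>(x(k)) satisfies a contractive
   recursion with summable forcing and is summable; by the tower property the conditional
   expectations have an integrable, hence almost surely finite, sum. *)

theory Submission
  imports Defs
begin

lemma diff_square_le_weighted:
  fixes u d e :: real
  assumes e: "e > 0"
  shows "(u - d)\<^sup>2 \<le> (1 + e) * u\<^sup>2 + (1 + 1/e) * d\<^sup>2"
proof -
  have "(1 + e) * u\<^sup>2 + (1 + 1/e) * d\<^sup>2 - (u - d)\<^sup>2 = (e * u + d)\<^sup>2 / e"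
    using e by (simp add: power2_eq_square field_simps)
  moreover have "(e * u + d)\<^sup>2 / e \<ge> 0" using e by simp
  ultimately show ?thesis by linarith
qed

lemma sum_inverse_squares_le: "(\<Sum>t=1..n. (1 / real t)\<^sup>2) \<le> pi\<^sup>2 / 6"
proof -
  have sums: "(\<lambda>t. 1 / (1 + real t)\<^sup>2) sums (pi\<^sup>2 / 6)"
    using inverse_squares_sums by (simp add: add.commute)
  have "(\<Sum>t=1..n. (1 / real t)\<^sup>2) = (\<Sum>t<n. 1 / (1 + real t)\<^sup>2)"
    by (induction n) (simp_all add: power_one_over)
  also have "\<dots> \<le> pi\<^sup>2 / 6"
    using sum_le_suminf[OF sums_summable[OF sums]] sums_unique[OF sums] by simp
  finally show ?thesis .
qed

lemma sum_inverse_squares_of_counts: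
  "(\<Sum>k<(n::nat). if P k then (1 / real (card {l\<in>{..k}. P l}))\<^sup>2 else 0) =
   (\<Sum>t=1..card {l\<in>{..<n}. P l}. (1 / real t)\<^sup>2)"
proof (induction n)
  case 0 then show ?case by simp
next
  case (Suc n)
  show ?case
  proof (cases "P n")
    case True
    have "{l\<in>{..n}. P l} = insert n {l\<in>{..<n}. P l}" "{l\<in>{..<Suc n}. P l} = insert n {l\<in>{..<n}. P l}"
      using True by auto
    then show ?thesis using Suc True by simp
  next
    case False
    have "{l\<in>{..<Suc n}. P l} = {l\<in>{..<n}. P l}" using False by (auto simp: less_Suc_eq)
    then show ?thesis using Suc False by simp
  qed
qed

lemma sum_le_of_contractive_recursion:
  fixes r s :: "nat \<Rightarrow> real"
  assumes c: "0 \<le> c" "c < 1" and r: "\<And>k. r k \<ge> 0"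
    and rec: "\<And>k. r (Suc k) \<le> c * r k + s k" and s: "\<And>n. (\<Sum>k<n. s k) \<le> S"
  shows "(\<Sum>k<n. r k) \<le> (r 0 + S) / (1 - c)"
proof (cases n)
  case 0
  have "0 \<le> S" using s[of 0] by simp
  then show ?thesis using 0 c r[of 0] by simp
next
  case (Suc n')
  let ?S = "\<Sum>k<n. r k"
  have "?S = r 0 + (\<Sum>k<n'. r (Suc k))" unfolding Suc by (rule sum.lessThan_Suc_shift)
  also have "\<dots> \<le> r 0 + (\<Sum>k<n'. c * r k + s k)" using rec by (simp add: sum_mono)
  also have "\<dots> = r 0 + c * (\<Sum>k<n'. r k) + (\<Sum>k<n'. s k)"
    by (simp add: sum.distrib sum_distrib_left)
  also have "\<dots> \<le> r 0 + c * ?S + S"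
    using s[of n'] c r unfolding Suc by (intro add_mono mult_left_mono) (auto intro: sum_nonneg)
  finally have "?S * (1 - c) \<le> r 0 + S" by (simp add: algebra_simps)
  then show ?thesis using c by (simp add: pos_le_divide_eq)
qed

lemma suminf_finite_of_contractive_recursion:
  fixes r s :: "nat \<Rightarrow> ennreal" and c :: real
  assumes c: "0 \<le> c" "c < 1" and r0: "r 0 \<noteq> \<infinity>"
    and rec: "\<And>k. r (Suc k) \<le> ennreal c * r k + s k" and s: "(\<Sum>k. s k) \<noteq> \<infinity>"
  shows "(\<Sum>k. r k) \<noteq> \<infinity>"
proof -
  have s_fin: "s k \<noteq> \<infinity>" for k
    using s ennreal_suminf_lessD[of s \<top> k] by (auto simp: less_top)
  have r_fin: "r k \<noteq> \<infinity>" for k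
  proof (induction k)
    case (Suc k)
    have "ennreal c * r k + s k < \<infinity>" using Suc s_fin[of k] by (simp add: less_top ennreal_mult_less_top)
    then show ?case using rec[of k] by (auto simp: top_unique)
  qed (rule r0)
  have r_eq: "r k = ennreal (enn2real (r k))" and s_eq: "s k = ennreal (enn2real (s k))" for k
    using r_fin s_fin by (simp_all add: ennreal_enn2real_if)
  have "enn2real (r (Suc k)) \<le> c * enn2real (r k) + enn2real (s k)" for k
  proof -
    have "ennreal (c * enn2real (r k) + enn2real (s k)) = ennreal c * r k + s k"
      using c r_fin s_fin by (simp add: ennreal_plus ennreal_mult ennreal_enn2real_if)
    then have "enn2real (r (Suc k)) \<le> enn2real (ennreal (c * enn2real (r k) + enn2real (s k)))"
      using rec[of k] r_fin s_fin by (intro enn2real_mono) (auto simp: ennreal_mult_less_top top.not_eq_extremum)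
    then show ?thesis using c by (subst (asm) enn2real_ennreal) auto
  qed
  moreover have "(\<Sum>k<n. enn2real (s k)) \<le> enn2real (\<Sum>k. s k)" for n
  proof -
    have "ennreal (\<Sum>k<n. enn2real (s k)) = (\<Sum>k<n. s k)"
      by (subst sum_ennreal[symmetric]) (auto simp: s_eq[symmetric])
    also have "\<dots> \<le> (\<Sum>k. s k)" by (rule sum_le_suminf) auto
    finally show ?thesis using enn2real_mono s by (fastforce simp: less_top sum_nonneg)
  qed
  ultimately have bound: "(\<Sum>k<n. enn2real (r k)) \<le> (enn2real (r 0) + enn2real (\<Sum>k. s k)) / (1 - c)" for n
    using c by (intro sum_le_of_contractive_recursion) auto
  have "(\<Sum>k<n. r k) \<le> ennreal ((enn2real (r 0) + enn2real (\<Sum>k. s k)) / (1 - c))" for n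
    using bound[of n] by (subst r_eq, subst sum_ennreal) (auto intro: ennreal_leI)
  then have "(\<Sum>k. r k) \<le> ennreal ((enn2real (r 0) + enn2real (\<Sum>k. s k)) / (1 - c))"
    unfolding suminf_eq_SUP by (intro SUP_least) auto
  then show ?thesis by (auto simp: top_unique)
qed

lemma AE_suminf_nn_cond_exp_finite:
  assumes F: "\<And>k. sigma_finite_subalgebra M (F k)"
    and f: "\<And>k. f k \<in> borel_measurable M"
    and fin: "(\<Sum>k. \<integral>\<^sup>+x. f k x \<partial>M) \<noteq> \<infinity>"
  shows "AE x in M. (\<Sum>k. nn_cond_exp M (F k) (f k) x) < \<infinity>"
proof -
  have meas: "nn_cond_exp M (F k) (f k) \<in> borel_measurable M" for k
    by (rule borel_measurable_nn_cond_exp2)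
  have "(\<integral>\<^sup>+x. (\<Sum>k. nn_cond_exp M (F k) (f k) x) \<partial>M)
      = (\<Sum>k. \<integral>\<^sup>+x. nn_cond_exp M (F k) (f k) x \<partial>M)"
    by (rule nn_integral_suminf) (rule meas)
  also have "\<dots> = (\<Sum>k. \<integral>\<^sup>+x. f k x \<partial>M)"
    using sigma_finite_subalgebra.nn_cond_exp_intg[OF F, of "\<lambda>_. 1"] f by simp
  finally have "(\<integral>\<^sup>+x. (\<Sum>k. nn_cond_exp M (F k) (f k) x) \<partial>M) \<noteq> \<infinity>" using fin by simp
  then show ?thesis
    using nn_integral_PInf_AE[OF borel_measurable_suminf_order[OF meas]] by (simp add: less_top)
qed

lemma measurable_PiM_pmf_prefix:
  fixes g :: "(nat \<Rightarrow> 'a::countable) \<Rightarrow> 'b::topological_space"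
  assumes dep: "\<And>x y. (\<forall>l<n. x l = y l) \<Longrightarrow> g x = g y" and J: "{..<n} \<subseteq> J"
  shows "g \<in> borel_measurable (PiM J (\<lambda>_. measure_pmf P))"
proof -
  let ?M = "PiM J (\<lambda>_. measure_pmf P)"
  define L where "L x = map x [0..<n]" for x :: "nat \<Rightarrow> 'a"
  define g' where "g' xs = g (\<lambda>l. xs ! l)" for xs :: "'a list"
  have coord: "Measurable.pred ?M (\<lambda>x. x l = c)" if "l \<in> J" for l c
  proof -
    have "(\<lambda>x. x l) -` {c} \<inter> space ?M \<in> sets ?M"
      by (rule measurable_sets[OF measurable_component_singleton[OF that]]) simp
    moreover have "(\<lambda>x. x l) -` {c} \<inter> space ?M = {x\<in>space ?M. x l = c}" by auto
    ultimately show ?thesis unfolding pred_def by simp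
  qed
  have L: "L \<in> measurable ?M (count_space UNIV)"
    unfolding measurable_count_space_eq2_countable
  proof (intro conjI ballI)
    show "L \<in> space ?M \<rightarrow> UNIV" by simp
    fix xs :: "'a list"
    show "L -` {xs} \<inter> space ?M \<in> sets ?M"
    proof (cases "length xs = n")
      case True
      have "map x [0..<n] = xs \<longleftrightarrow> (\<forall>l\<in>{..<n}. x l = xs ! l)" for x
        using True by (simp add: list_eq_iff_nth_eq Ball_def lessThan_iff)
      then have "L -` {xs} \<inter> space ?M = {x\<in>space ?M. \<forall>l\<in>{..<n}. x l = xs ! l}"
        unfolding L_def by blast
      moreover have "Measurable.pred ?M (\<lambda>x. \<forall>l\<in>{..<n}. x l = xs ! l)"
        using J by (intro pred_intros_finite coord) auto
      ultimately show ?thesis unfolding pred_def by simp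
    next
      case False
      then have "L -` {xs} \<inter> space ?M = {}" unfolding L_def by auto
      then show ?thesis by simp
    qed
  qed
  have "g x = g' (L x)" for x unfolding g'_def L_def by (rule dep) simp
  then have "g = g' \<circ> L" by auto
  moreover have "g' \<in> measurable (count_space UNIV) borel" by (simp add: measurable_count_space_eq1)
  ultimately show ?thesis using measurable_comp[OF L] by metis
qed

lemma nn_integral_PiM_pmf_prefix:
  fixes h :: "(nat \<Rightarrow> 'a::countable) \<Rightarrow> ennreal"
  assumes dep: "\<And>x y. (\<forall>l<n. x l = y l) \<Longrightarrow> h x = h y"
  shows "(\<integral>\<^sup>+x. h x \<partial>PiM UNIV (\<lambda>_. measure_pmf P))
      = (\<integral>\<^sup>+x. h x \<partial>PiM {..<n} (\<lambda>_. measure_pmf P))"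
proof -
  interpret product_prob_space "\<lambda>_::nat. measure_pmf P" UNIV by unfold_locales
  have h: "h \<in> borel_measurable (PiM {..<n} (\<lambda>_. measure_pmf P))"
    using measurable_PiM_pmf_prefix[OF dep order_refl] .
  have "(\<integral>\<^sup>+x. h x \<partial>PiM {..<n} (\<lambda>_. measure_pmf P)) =
      (\<integral>\<^sup>+x. h x \<partial>distr (PiM UNIV (\<lambda>_. measure_pmf P)) (PiM {..<n} (\<lambda>_. measure_pmf P)) (\<lambda>x. restrict x {..<n}))"
    by (subst distr_PiM_restrict_finite) auto
  also have "\<dots> = (\<integral>\<^sup>+x. h (restrict x {..<n}) \<partial>PiM UNIV (\<lambda>_. measure_pmf P))"
    using h by (intro nn_integral_distr) (simp_all add: measurable_restrict_subset)
  also have "\<dots> = (\<integral>\<^sup>+x. h x \<partial>PiM UNIV (\<lambda>_. measure_pmf P))"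
    by (intro nn_integral_cong dep) simp
  finally show ?thesis by simp
qed

lemma nn_integral_PiM_pmf_last:
  fixes g :: "(nat \<Rightarrow> 'a::countable) \<Rightarrow> ennreal"
  assumes dep: "\<And>x y. (\<forall>l<Suc k. x l = y l) \<Longrightarrow> g x = g y"
  shows "(\<integral>\<^sup>+x. g x \<partial>PiM UNIV (\<lambda>_. measure_pmf P)) =
    (\<integral>\<^sup>+x. (\<integral>\<^sup>+p. g (x(k := p)) \<partial>measure_pmf P) \<partial>PiM UNIV (\<lambda>_. measure_pmf P))"
proof -
  interpret product_prob_space "\<lambda>_::nat. measure_pmf P" UNIV by unfold_locales
  have "(\<integral>\<^sup>+x. g x \<partial>PiM UNIV (\<lambda>_. measure_pmf P))
      = (\<integral>\<^sup>+x. g x \<partial>PiM (insert k {..<k}) (\<lambda>_. measure_pmf P))"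
    using nn_integral_PiM_pmf_prefix[of "Suc k" g P, OF dep] by (simp add: lessThan_Suc)
  also have "\<dots> = (\<integral>\<^sup>+x. (\<integral>\<^sup>+p. g (x(k := p)) \<partial>measure_pmf P) \<partial>PiM {..<k} (\<lambda>_. measure_pmf P))"
  proof (rule product_nn_integral_insert)
    show "g \<in> borel_measurable (PiM (insert k {..<k}) (\<lambda>_. measure_pmf P))"
      by (rule measurable_PiM_pmf_prefix[OF dep]) auto
  qed simp_all
  also have "\<dots> = (\<integral>\<^sup>+x. (\<integral>\<^sup>+p. g (x(k := p)) \<partial>measure_pmf P) \<partial>PiM UNIV (\<lambda>_. measure_pmf P))"
  proof (rule nn_integral_PiM_pmf_prefix[symmetric])
    fix x y :: "nat \<Rightarrow> 'a" assume "\<forall>l<k. x l = y l"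
    then show "(\<integral>\<^sup>+p. g (x(k := p)) \<partial>measure_pmf P) = (\<integral>\<^sup>+p. g (y(k := p)) \<partial>measure_pmf P)"
      by (intro nn_integral_cong dep) (auto simp: less_Suc_eq)
  qed
  finally show ?thesis .
qed

lemma compact_Omega_loc:
  assumes "\<And>j. j \<in> NtI N E i \<Longrightarrow> compact (Om j)"
  shows "compact (Omega_loc N E Om i)"
proof -
  have "Omega_loc N E Om i = PiE UNIV (\<lambda>j. if j \<in> NtI N E i then Om j else {0})"
    unfolding Omega_loc_def PiE_def Pi_def extensional_def by auto
  moreover have "compactin (product_topology (\<lambda>_. euclidean) UNIV)
      (PiE UNIV (\<lambda>j. if j \<in> NtI N E i then Om j else {0::real}))"
    using assms unfolding compactin_PiE compactin_euclidean_iff by auto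
  ultimately show ?thesis unfolding euclidean_product_topology compactin_euclidean_iff by simp
qed

lemma uniform_bound_on_compacts:
  fixes f :: "'i \<Rightarrow> 'a::topological_space \<Rightarrow> real"
  assumes "finite I" and "\<And>i. i \<in> I \<Longrightarrow> compact (D i)" and "\<And>i. i \<in> I \<Longrightarrow> continuous_on (D i) (f i)"
  obtains G where "\<And>i y. i \<in> I \<Longrightarrow> y \<in> D i \<Longrightarrow> \<bar>f i y\<bar> \<le> G"
proof -
  have "compact (\<Union>i\<in>I. f i ` D i)"
    using assms by (intro compact_UN compact_continuous_image) auto
  then obtain G where "\<forall>z\<in>(\<Union>i\<in>I. f i ` D i). \<bar>z\<bar> \<le> G"
    using compact_imp_bounded bounded_real by meson
  then show ?thesis using that by blast
qed

lemma sigma_finite_subalgebra_Mfield: "sigma_finite_subalgebra (pairs_space N EC) (Mfield N EC k)"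
proof (rule finite_measure_subalgebra_is_sigma_finite)
  let ?M = "pairs_space N EC"
  let ?A = "{(\<lambda>\<omega>. \<omega> l) -` A \<inter> space ?M | l A. l < k}"
  have "?A \<subseteq> sets ?M"
  proof
    fix X assume "X \<in> ?A"
    then obtain l A where X: "X = (\<lambda>\<omega>. \<omega> l) -` A \<inter> space ?M" by blast
    have "(\<lambda>\<omega>. \<omega> l) \<in> measurable ?M (measure_pmf (pair_pmf N EC))"
      unfolding pairs_space_def by (rule measurable_component_singleton) simp
    then show "X \<in> sets ?M" unfolding X by (rule measurable_sets) simp
  qed
  then have "subalgebra ?M (Mfield N EC k)"
    unfolding Mfield_def subalgebra_def
    by (simp add: space_measure_of_conv sets_measure_of_conv sets.sigma_sets_subset)
  moreover have "prob_space ?M"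
    unfolding pairs_space_def by (intro prob_space_PiM prob_space_measure_pmf)
  then have "finite_measure ?M" unfolding prob_space_def by simp
  ultimately show "finite_measure_subalgebra ?M (Mfield N EC k)"
    unfolding finite_measure_subalgebra_def finite_measure_subalgebra_axioms_def by simp
qed

locale gossip_graphs =
  fixes N :: nat and EI EC Em :: "(nat \<times> nat) set"
  assumes N_ge_2: "N \<ge> 2"
    and EI_simple: "simple_graph N EI" and EI_connected: "graph_connected N EI"
    and Em_max_tri_free: "max_tri_free_spanning N EI Em"
    and EC_simple: "simple_graph N EC" and Em_subset_EC: "Em \<subseteq> EC" and EC_subset_EI: "EC \<subseteq> EI"
begin

abbreviation V :: "nat set" where "V \<equiv> {1..N}"
abbreviation nbI :: "nat \<Rightarrow> nat set" where "nbI \<equiv> NI N EI"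
abbreviation nbtI :: "nat \<Rightarrow> nat set" where "nbtI \<equiv> NtI N EI"
abbreviation nbC :: "nat \<Rightarrow> nat set" where "nbC \<equiv> NI N EC"
abbreviation sp :: "nat \<Rightarrow> nat \<Rightarrow> nat" where "sp \<equiv> spos N EI"
abbreviation m :: nat where "m \<equiv> mtot N EI"
abbreviation mloc :: "nat \<Rightarrow> nat" where "mloc \<equiv> mi N EI"

section \<open>Positions of the estimates and the matrices W, H and Hbar\<close>

(* The estimates of player i occupy the block (block_offset i, block_offset i + mloc i] of R^m,
   ordered by the index of the estimated player: sp i j = block_offset i + nbr_rank i j. *)
definition nbr_rank :: "nat \<Rightarrow> nat \<Rightarrow> nat" where "nbr_rank i j = card (nbtI i \<inter> {1..j})"
definition block_offset :: "nat \<Rightarrow> nat" where "block_offset i = (\<Sum>r=1..i-1. mloc r)"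

lemma EI_in_V: "(i,j) \<in> EI \<Longrightarrow> i \<in> V \<and> j \<in> V"
  using EI_simple unfolding simple_graph_def by auto
lemma EI_sym: "(i,j) \<in> EI \<Longrightarrow> (j,i) \<in> EI"
  using EI_simple unfolding simple_graph_def by (meson symD)
lemma EI_irrefl: "(i,i) \<notin> EI"
  using EI_simple unfolding simple_graph_def by auto
lemma EC_in_V: "(i,j) \<in> EC \<Longrightarrow> i \<in> V \<and> j \<in> V"
  using EC_simple unfolding simple_graph_def by auto
lemma EC_sym: "(i,j) \<in> EC \<Longrightarrow> (j,i) \<in> EC"
  using EC_simple unfolding simple_graph_def by (meson symD)
lemma EC_irrefl: "(i,i) \<notin> EC"
  using EC_simple unfolding simple_graph_def by auto

lemma nbI_iff: "j \<in> nbI i \<longleftrightarrow> (i,j) \<in> EI"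
  unfolding NI_def using EI_in_V by auto
lemma nbC_iff: "j \<in> nbC i \<longleftrightarrow> (i,j) \<in> EC"
  unfolding NI_def using EC_in_V by auto
lemma nbI_subset: "nbI i \<subseteq> V" unfolding NI_def by auto
lemma nbC_subset: "nbC i \<subseteq> V" unfolding NI_def by auto
lemma finite_nbI[simp]: "finite (nbI i)" using nbI_subset finite_subset by blast
lemma finite_nbC[simp]: "finite (nbC i)" using nbC_subset finite_subset by blast
lemma finite_nbtI[simp]: "finite (nbtI i)" unfolding NtI_def by simp
lemma nbI_sym: "j \<in> nbI i \<longleftrightarrow> i \<in> nbI j" by (meson nbI_iff EI_sym)
lemma nbI_irrefl: "i \<notin> nbI i" using nbI_iff EI_irrefl by blast
lemma self_in_nbtI: "i \<in> nbtI i" unfolding NtI_def by simp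
lemma nbtI_iff: "j \<in> nbtI i \<longleftrightarrow> j = i \<or> j \<in> nbI i" unfolding NtI_def by auto
lemma nbtI_subset: "i \<in> V \<Longrightarrow> nbtI i \<subseteq> V" unfolding NtI_def using nbI_subset by auto
lemma nbtI_sym: "j \<in> nbtI i \<longleftrightarrow> i \<in> nbtI j" unfolding nbtI_iff using nbI_sym[of j i] by auto
lemma nbI_outside: "i \<notin> V \<Longrightarrow> nbI i = {}" using nbI_iff EI_in_V by blast
lemma mloc_eq_card: "mloc i = card (nbtI i)"
  unfolding mi_def NtI_def using nbI_irrefl by simp
lemma mloc_ge_1: "mloc i \<ge> 1" unfolding mi_def by simp
lemma card_nbI_le: "card (nbI i) \<le> N"
  using card_mono[OF _ nbI_subset] by fastforce
lemma card_nbC_le: "card (nbC i) \<le> N"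
  using card_mono[OF _ nbC_subset] by fastforce

lemma holders_eq_nbtI: "j \<in> V \<Longrightarrow> {i\<in>V. j \<in> nbtI i} = nbtI j"
proof
  show "{i \<in> V. j \<in> nbtI i} \<subseteq> nbtI j" using nbtI_sym by auto
  assume "j \<in> V"
  then show "nbtI j \<subseteq> {i \<in> V. j \<in> nbtI i}" using nbtI_sym[of _ j] nbtI_subset[of j] by auto
qed

lemma sum_Bmat_eq_nbr_rank: "(\<Sum>l=1..j. Bmat N EI i l) = nbr_rank i j"
proof -
  have "(\<Sum>l=1..j. Bmat N EI i l) = (\<Sum>l\<in>{1..j}. if l \<in> nbtI i then 1 else 0)"
    unfolding Bmat_def by simp
  also have "\<dots> = card ({1..j} \<inter> nbtI i)"
    by (simp add: sum.If_cases)
  finally show ?thesis unfolding nbr_rank_def by (simp add: Int_commute)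
qed

lemma spos_eq: "sp i j = nbr_rank i j + block_offset i"
  unfolding spos_def sum_Bmat_eq_nbr_rank block_offset_def by simp

lemma nbr_rank_ge_1: "i \<in> V \<Longrightarrow> j \<in> nbtI i \<Longrightarrow> 1 \<le> nbr_rank i j"
proof -
  assume a: "i \<in> V" "j \<in> nbtI i"
  then have "j \<in> V" using nbtI_subset by blast
  then have "j \<in> nbtI i \<inter> {1..j}" using a by auto
  then show ?thesis unfolding nbr_rank_def
    by (metis One_nat_def Suc_leI card_gt_0_iff empty_iff finite_nbtI finite_Int)
qed

lemma nbr_rank_le_mloc: "nbr_rank i j \<le> mloc i"
  unfolding nbr_rank_def mloc_eq_card by (simp add: card_mono)

lemma nbr_rank_strict_mono: "j \<in> nbtI i \<Longrightarrow> j' \<in> nbtI i \<Longrightarrow> j < j' \<Longrightarrow> nbr_rank i j < nbr_rank i j'"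
proof -
  assume a: "j \<in> nbtI i" "j' \<in> nbtI i" "j < j'"
  have "nbtI i \<inter> {1..j} \<subset> nbtI i \<inter> {1..j'}"
  proof
    show "nbtI i \<inter> {1..j} \<subseteq> nbtI i \<inter> {1..j'}" using a by auto
    have "j' \<noteq> 0" using a by auto
    then have "j' \<in> nbtI i \<inter> {1..j'}" using a by auto
    moreover have "j' \<notin> nbtI i \<inter> {1..j}" using a by auto
    ultimately show "nbtI i \<inter> {1..j} \<noteq> nbtI i \<inter> {1..j'}" by blast
  qed
  then show ?thesis unfolding nbr_rank_def by (simp add: psubset_card_mono)
qed

lemma inj_on_nbr_rank: "inj_on (nbr_rank i) (nbtI i)"
proof (rule inj_onI)
  fix j j' assume "j \<in> nbtI i" "j' \<in> nbtI i" "nbr_rank i j = nbr_rank i j'"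
  then show "j = j'" using nbr_rank_strict_mono by (metis less_irrefl nat_neq_iff)
qed

lemma nbr_rank_image: "i \<in> V \<Longrightarrow> nbr_rank i ` nbtI i = {1..mloc i}"
proof -
  assume i: "i \<in> V"
  have sub: "nbr_rank i ` nbtI i \<subseteq> {1..mloc i}" using nbr_rank_ge_1[OF i] nbr_rank_le_mloc by auto
  have "card (nbr_rank i ` nbtI i) = mloc i" using card_image[OF inj_on_nbr_rank] mloc_eq_card by simp
  then show ?thesis using sub by (simp add: card_subset_eq)
qed

lemma block_offset_Suc: "i \<ge> 1 \<Longrightarrow> block_offset (Suc i) = block_offset i + mloc i"
  unfolding block_offset_def by (cases i) simp_all

lemma block_offset_le:
  assumes "1 \<le> i" "i < i'"
  shows "block_offset i + mloc i \<le> block_offset i'"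
proof -
  have "block_offset i + mloc i = block_offset (Suc i)" using block_offset_Suc assms(1) by simp
  also have "\<dots> \<le> block_offset i'"
    unfolding block_offset_def using assms(2) by (intro sum_mono2) auto
  finally show ?thesis .
qed

lemma mtot_eq_block_offset: "m = block_offset (Suc N)"
  unfolding mtot_def block_offset_def by simp

lemma block_offset_1: "block_offset 1 = 0" unfolding block_offset_def by simp

lemma spos_in_block: "i \<in> V \<Longrightarrow> j \<in> nbtI i
    \<Longrightarrow> block_offset i < sp i j \<and> sp i j \<le> block_offset i + mloc i"
  using nbr_rank_ge_1 nbr_rank_le_mloc spos_eq by fastforce

lemma spos_range: "i \<in> V \<Longrightarrow> j \<in> nbtI i \<Longrightarrow> sp i j \<in> {1..m}"
  using spos_in_block block_offset_le[of i "Suc N"] mtot_eq_block_offset by fastforce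

lemma spos_inj: "i \<in> V \<Longrightarrow> j \<in> nbtI i \<Longrightarrow> i' \<in> V
    \<Longrightarrow> j' \<in> nbtI i' \<Longrightarrow> sp i j = sp i' j' \<Longrightarrow> i = i' \<and> j = j'"
proof -
  assume a: "i \<in> V" "j \<in> nbtI i" "i' \<in> V" "j' \<in> nbtI i'" "sp i j = sp i' j'"
  have "i = i'"
  proof (rule ccontr)
    assume "i \<noteq> i'"
    then consider "i < i'" | "i' < i" by linarith
    then show False
    proof cases
      case 1 then show ?thesis using block_offset_le[of i i'] spos_in_block[of i j] spos_in_block[of i' j'] a by auto
    next
      case 2 then show ?thesis using block_offset_le[of i' i] spos_in_block[of i j] spos_in_block[of i' j'] a by auto
    qed
  qed
  then have "nbr_rank i j = nbr_rank i j'" using a spos_eq by simp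
  then show ?thesis using inj_on_nbr_rank \<open>i = i'\<close> a by (metis inj_on_def)
qed

lemma spos_surj: "p \<in> {1..m} \<Longrightarrow> \<exists>i\<in>V. \<exists>j\<in>nbtI i. p = sp i j"
proof -
  assume p: "p \<in> {1..m}"
  define S where "S = {i\<in>V. block_offset i < p}"
  have "1 \<in> S" unfolding S_def using block_offset_1 p N_ge_2 by auto
  have finS: "finite S" unfolding S_def by simp
  define i where "i = Max S"
  have iS: "i \<in> S" unfolding i_def using finS \<open>1 \<in> S\<close> Max_in by blast
  then have iV: "i \<in> V" and oi: "block_offset i < p" unfolding S_def by auto
  have "p \<le> block_offset i + mloc i"
  proof (cases "i = N")
    case True then show ?thesis using block_offset_Suc[of N] p mtot_eq_block_offset N_ge_2 by auto
  next
    case False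
    then have "Suc i \<in> V" using iV by auto
    have "Suc i \<notin> S" using Max_ge[OF finS, of "Suc i"] unfolding i_def by linarith
    then have "block_offset (Suc i) \<ge> p" unfolding S_def using \<open>Suc i \<in> V\<close> by auto
    then show ?thesis using block_offset_Suc iV by auto
  qed
  then have "p - block_offset i \<in> {1..mloc i}" using oi by auto
  then obtain j where "j \<in> nbtI i" "nbr_rank i j = p - block_offset i" using nbr_rank_image[OF iV] by (metis imageE)
  then show ?thesis using iV oi spos_eq by (intro bexI[of _ i] bexI[of _ j]) auto
qed

lemma Evec_eq: "Evec N EI i l q = (if l \<in> nbtI i \<and> q = sp i l then 1 else 0)"
  unfolding Evec_def unitv_def by auto

lemma sum_Evec_mult: "i \<in> V \<Longrightarrow> l \<in> nbtI i \<Longrightarrow> (\<Sum>q=1..m. Evec N EI i l q * x q) = x (sp i l)"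
proof -
  assume a: "i \<in> V" "l \<in> nbtI i"
  have "(\<Sum>q=1..m. Evec N EI i l q * x q) = (\<Sum>q=1..m. if q = sp i l then x q else 0)"
    using a by (intro sum.cong) (auto simp: Evec_eq)
  also have "\<dots> = x (sp i l)" using spos_range[OF a] by (simp add: sum.delta')
  finally show ?thesis .
qed

lemma ind_subset: "ind N EI a b \<subseteq> nbtI a" "ind N EI a b \<subseteq> nbtI b"
  unfolding ind_def by auto

lemma finite_ind[simp]: "finite (ind N EI a b)" unfolding ind_def by simp

lemma ind_eq_empty:
  assumes "a \<noteq> b" and "\<not> (a \<in> V \<and> b \<in> V)"
  shows "ind N EI a b = {}"
proof -
  have outside: "nbtI c = {c}" "c \<notin> nbtI d" if "c \<notin> V" "c \<noteq> d" for c d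
    using that nbI_outside[OF that(1)] nbI_subset[of d] unfolding NtI_def by auto
  show ?thesis
    using assms outside[of a b] outside[of b a] unfolding ind_def by (cases "a \<in> V") auto
qed

definition gossip_avg :: "nat \<Rightarrow> nat \<Rightarrow> (nat \<Rightarrow> real) \<Rightarrow> nat \<Rightarrow> nat \<Rightarrow> real" where
  "gossip_avg a b x i j = (if a \<in> V \<and> b \<in> V \<and> a \<noteq> b \<and> (i = a \<or> i = b) \<and> j \<in> ind N EI a b
     then (x (sp a j) + x (sp b j)) / 2 else x (sp i j))"

lemma mulv_Wmat:
  assumes "p \<in> {1..m}"
  shows "mulv m (Wmat N EI a b) x p = x p
   - 1/2 * (\<Sum>l\<in>ind N EI a b. (Evec N EI a l p - Evec N EI b l p) *
        (\<Sum>q=1..m. (Evec N EI a l q - Evec N EI b l q) * x q))"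
proof -
  let ?c = "\<lambda>l q. Evec N EI a l q - Evec N EI b l q"
  have "mulv m (Wmat N EI a b) x p = (\<Sum>q=1..m. (if p = q then 1 else 0) * x q - 1/2 * (\<Sum>l\<in>ind N EI a b. ?c l p * ?c l q * x q))"
    unfolding mulv_def Wmat_def by (intro sum.cong refl) (simp add: left_diff_distrib sum_distrib_right mult.assoc)
  also have "\<dots> = (\<Sum>q=1..m. (if p = q then 1 else 0) * x q) - 1/2 * (\<Sum>q=1..m. \<Sum>l\<in>ind N EI a b. ?c l p * ?c l q * x q)"
    by (simp add: sum_subtractf sum_distrib_left)
  also have "(\<Sum>q=1..m. (if p = q then 1 else 0) * x q) = x p"
    using assms by (simp add: if_distrib[of "\<lambda>c. c * x _"] sum.delta cong: if_cong)
  also have "(\<Sum>q=1..m. \<Sum>l\<in>ind N EI a b. ?c l p * ?c l q * x q) = (\<Sum>l\<in>ind N EI a b. ?c l p * (\<Sum>q=1..m. ?c l q * x q))"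
    by (subst sum.swap) (simp add: sum_distrib_left mult.assoc)
  finally show ?thesis .
qed

lemma Evec_spos:
  assumes "i \<in> V" "j \<in> nbtI i" "a \<in> V" "l \<in> nbtI a"
  shows "Evec N EI a l (sp i j) = (if i = a \<and> l = j then 1 else 0)"
proof -
  have "sp i j = sp a l \<longleftrightarrow> i = a \<and> l = j" using spos_inj[OF assms] by auto
  then show ?thesis unfolding Evec_eq using assms(4) by simp
qed

lemma mulv_Wmat_spos:
  assumes ij: "i \<in> V" "j \<in> nbtI i"
  shows "mulv m (Wmat N EI a b) x (sp i j) = gossip_avg a b x i j"
proof (cases "a \<in> V \<and> b \<in> V \<and> a \<noteq> b")
  case False
  then consider "a = b" | "a \<noteq> b" "\<not> (a \<in> V \<and> b \<in> V)" by blast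
  then show ?thesis
    using False unfolding mulv_Wmat[OF spos_range[OF ij]] gossip_avg_def
    by cases (simp_all add: ind_eq_empty)
next
  case True
  then have aV: "a \<in> V" and bV: "b \<in> V" and ab: "a \<noteq> b" by auto
  let ?I = "ind N EI a b"
  let ?g = "\<lambda>l. x (sp a l) - x (sp b l)"
  have "(Evec N EI a l (sp i j) - Evec N EI b l (sp i j)) *
        (\<Sum>q=1..m. (Evec N EI a l q - Evec N EI b l q) * x q)
      = (if i = a \<and> l = j then ?g l else 0) - (if i = b \<and> l = j then ?g l else 0)" if "l \<in> ?I" for l
  proof -
    have la: "l \<in> nbtI a" and lb: "l \<in> nbtI b" using that ind_subset[of a b] by auto
    show ?thesis
      using sum_Evec_mult[OF aV la, of x] sum_Evec_mult[OF bV lb, of x]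
      unfolding Evec_spos[OF ij aV la] Evec_spos[OF ij bV lb]
      by (simp add: left_diff_distrib sum_subtractf)
  qed
  then have "mulv m (Wmat N EI a b) x (sp i j) = x (sp i j)
      - 1/2 * ((\<Sum>l\<in>?I. if i = a \<and> l = j then ?g l else 0) - (\<Sum>l\<in>?I. if i = b \<and> l = j then ?g l else 0))"
    unfolding mulv_Wmat[OF spos_range[OF ij]] by (simp add: sum_subtractf)
  also have "\<dots> = x (sp i j) - 1/2 * ((if i = a \<and> j \<in> ?I then ?g j else 0) - (if i = b \<and> j \<in> ?I then ?g j else 0))"
    by (cases "i = a"; cases "i = b") (simp_all add: sum.delta)
  also have "\<dots> = gossip_avg a b x i j"
    unfolding gossip_avg_def using ab aV bV by (auto simp: field_simps)
  finally show ?thesis .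
qed

definition est_mean :: "(nat \<Rightarrow> real) \<Rightarrow> nat \<Rightarrow> real" where
  "est_mean x j = (\<Sum>i'\<in>nbtI j. x (sp i' j)) / real (mloc j)"

lemma Hmat_spos: "i \<in> V \<Longrightarrow> j \<in> nbtI i \<Longrightarrow> j' \<in> V
    \<Longrightarrow> Hmat N EI (sp i j) j' = (if j' = j then 1 else 0)"
proof -
  assume ij: "i \<in> V" "j \<in> nbtI i" and j': "j' \<in> V"
  have "Hmat N EI (sp i j) j' = (\<Sum>i'\<in>V. if i' = i \<and> j' = j then 1 else 0)"
    unfolding Hmat_def using spos_inj[OF ij] ij by (intro sum.cong) (auto simp: Evec_eq)
  also have "\<dots> = (if j' = j then 1 else 0)" using ij by (auto simp: sum.delta')
  finally show ?thesis .
qed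

lemma mulv_Hbar: "j \<in> V \<Longrightarrow> mulv m (Hbar N EI) x j = est_mean x j"
proof -
  assume jV: "j \<in> V"
  have "mulv m (Hbar N EI) x j = (\<Sum>q=1..m. Hmat N EI q j * x q) / real (mloc j)"
    unfolding mulv_def Hbar_def by (simp add: sum_divide_distrib)
  also have "(\<Sum>q=1..m. Hmat N EI q j * x q) = (\<Sum>i'\<in>V. \<Sum>q=1..m. Evec N EI i' j q * x q)"
    unfolding Hmat_def by (simp add: sum_distrib_right) (rule sum.swap)
  also have "\<dots> = (\<Sum>i'\<in>V. if j \<in> nbtI i' then x (sp i' j) else 0)"
  proof (intro sum.cong refl)
    fix i' assume "i' \<in> V"
    show "(\<Sum>q=1..m. Evec N EI i' j q * x q) = (if j \<in> nbtI i' then x (sp i' j) else 0)"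
    proof (cases "j \<in> nbtI i'")
      case True then show ?thesis using sum_Evec_mult[OF \<open>i' \<in> V\<close> True] by simp
    next
      case False then show ?thesis by (simp add: Evec_eq)
    qed
  qed
  also have "\<dots> = (\<Sum>i'\<in>{i'\<in>V. j \<in> nbtI i'}. x (sp i' j))"
    by (rule sum.inter_filter[symmetric]) simp
  also have "\<dots> = (\<Sum>i'\<in>nbtI j. x (sp i' j))" using holders_eq_nbtI[OF jV] by simp
  finally show ?thesis unfolding est_mean_def .
qed

lemma mulv_H_Hbar_spos: "i \<in> V \<Longrightarrow> j \<in> nbtI i
    \<Longrightarrow> mulv N (Hmat N EI) (mulv m (Hbar N EI) x) (sp i j) = est_mean x j"
proof -
  assume ij: "i \<in> V" "j \<in> nbtI i"
  then have jV: "j \<in> V" using nbtI_subset by blast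
  have "mulv N (Hmat N EI) (mulv m (Hbar N EI) x) (sp i j) = (\<Sum>j'\<in>V. if j' = j then mulv m (Hbar N EI) x j' else 0)"
    unfolding mulv_def using Hmat_spos[OF ij] by (intro sum.cong) auto
  also have "\<dots> = mulv m (Hbar N EI) x j" using jV by (simp add: sum.delta')
  finally show ?thesis using mulv_Hbar[OF jV] by simp
qed

section \<open>The disagreement potential\<close>

definition disagr :: "(nat \<Rightarrow> real) \<Rightarrow> real" where
  "disagr x = (\<Sum>i\<in>V. \<Sum>j\<in>nbI i. (x (sp i j) - x (sp j j))\<^sup>2)"

lemma disagr_nonneg: "disagr x \<ge> 0" unfolding disagr_def by (intro sum_nonneg) auto

lemma disagr_term_le: "i \<in> V \<Longrightarrow> j \<in> nbI i \<Longrightarrow> (x (sp i j) - x (sp j j))\<^sup>2 \<le> disagr x"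
proof -
  assume a: "i \<in> V" "j \<in> nbI i"
  have "(x (sp i j) - x (sp j j))\<^sup>2 \<le> (\<Sum>j\<in>nbI i. (x (sp i j) - x (sp j j))\<^sup>2)"
    using a by (intro member_le_sum) auto
  also have "\<dots> \<le> disagr x" unfolding disagr_def using a by (intro member_le_sum sum_nonneg) auto
  finally show ?thesis .
qed

lemma est_dev_le: "j \<in> V \<Longrightarrow> i' \<in> nbtI j \<Longrightarrow> \<bar>x (sp i' j) - x (sp j j)\<bar> \<le> sqrt (disagr x)"
proof -
  assume a: "j \<in> V" "i' \<in> nbtI j"
  have "(x (sp i' j) - x (sp j j))\<^sup>2 \<le> disagr x"
  proof (cases "i' = j")
    case True then show ?thesis using disagr_nonneg by simp
  next
    case False
    then have "i' \<in> nbI j" using a nbtI_iff by auto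
    then have "j \<in> nbI i'" "i' \<in> V" using nbI_sym[of i' j] nbI_subset[of j] by auto
    then show ?thesis using disagr_term_le by blast
  qed
  then show ?thesis by (simp add: real_le_rsqrt)
qed

lemma gossip_avg_dev_le:
  assumes ij: "i \<in> V" "j \<in> nbtI i"
  shows "\<bar>gossip_avg a b x i j - x (sp j j)\<bar> \<le> sqrt (disagr x)"
proof -
  have jV: "j \<in> V" using ij nbtI_subset by blast
  show ?thesis
  proof (cases "a \<in> V \<and> b \<in> V \<and> a \<noteq> b \<and> (i = a \<or> i = b) \<and> j \<in> ind N EI a b")
    case True
    then have "j \<in> nbtI a" "j \<in> nbtI b" using ind_subset[of a b] by auto
    then have "a \<in> nbtI j" "b \<in> nbtI j" using nbtI_sym[of j a] nbtI_sym[of j b] by auto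
    then have "\<bar>x (sp a j) - x (sp j j)\<bar> \<le> sqrt (disagr x)" "\<bar>x (sp b j) - x (sp j j)\<bar> \<le> sqrt (disagr x)"
      using est_dev_le[OF jV] by auto
    moreover have "gossip_avg a b x i j - x (sp j j) = ((x (sp a j) - x (sp j j)) + (x (sp b j) - x (sp j j))) / 2"
      unfolding gossip_avg_def using True by (simp add: field_simps)
    ultimately show ?thesis by (simp add: abs_le_iff)
  next
    case False
    then have "gossip_avg a b x i j = x (sp i j)" unfolding gossip_avg_def by auto
    then show ?thesis using est_dev_le[OF jV, of i x] ij(2) nbtI_sym[of j i] by simp
  qed
qed

lemma est_mean_dev_le:
  assumes jV: "j \<in> V"
  shows "\<bar>est_mean x j - x (sp j j)\<bar> \<le> sqrt (disagr x)"
proof -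
  have mloc_pos: "real (mloc j) > 0" using mloc_ge_1 by (simp add: Suc_le_eq)
  have "(\<Sum>i'\<in>nbtI j. x (sp i' j) - x (sp j j)) = (\<Sum>i'\<in>nbtI j. x (sp i' j)) - real (mloc j) * x (sp j j)"
    by (simp add: sum_subtractf mloc_eq_card)
  then have "est_mean x j - x (sp j j) = (\<Sum>i'\<in>nbtI j. x (sp i' j) - x (sp j j)) / real (mloc j)"
    using mloc_pos by (simp add: est_mean_def diff_divide_distrib)
  moreover have "\<bar>\<Sum>i'\<in>nbtI j. x (sp i' j) - x (sp j j)\<bar> \<le> real (mloc j) * sqrt (disagr x)"
  proof -
    have "\<bar>\<Sum>i'\<in>nbtI j. x (sp i' j) - x (sp j j)\<bar> \<le> (\<Sum>i'\<in>nbtI j. \<bar>x (sp i' j) - x (sp j j)\<bar>)"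
      by (rule sum_abs)
    also have "\<dots> \<le> (\<Sum>i'\<in>nbtI j. sqrt (disagr x))" using est_dev_le[OF jV] by (intro sum_mono) auto
    finally show ?thesis by (simp add: mloc_eq_card)
  qed
  ultimately show ?thesis using mloc_pos by (simp add: abs_divide divide_le_eq mult.commute)
qed

lemma avg_est_mean_sq_le:
  assumes ij: "i \<in> V" "j \<in> nbtI i"
  shows "(gossip_avg a b x i j - est_mean x j)\<^sup>2 \<le> 4 * disagr x"
proof -
  have jV: "j \<in> V" using ij nbtI_subset by blast
  have "\<bar>gossip_avg a b x i j - est_mean x j\<bar> \<le> 2 * sqrt (disagr x)"
    using gossip_avg_dev_le[OF ij, of a b x] est_mean_dev_le[OF jV, of x] by arith
  then have "\<bar>gossip_avg a b x i j - est_mean x j\<bar>\<^sup>2 \<le> (2 * sqrt (disagr x))\<^sup>2" by (intro power_mono) auto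
  then show ?thesis using disagr_nonneg by (simp add: power_mult_distrib)
qed

lemma consensus_error_le: "normsq m (\<lambda>p. mulv m (Wmat N EI a b) x p - mulv N (Hmat N EI) (mulv m (Hbar N EI) x) p)
   \<le> real m * (4 * disagr x)"
proof -
  have "normsq m (\<lambda>p. mulv m (Wmat N EI a b) x p - mulv N (Hmat N EI) (mulv m (Hbar N EI) x) p)
     \<le> (\<Sum>p=1..m. 4 * disagr x)"
    unfolding normsq_def
  proof (rule sum_mono)
    fix p assume "p \<in> {1..m}"
    then obtain i j where ij: "i \<in> V" "j \<in> nbtI i" and p: "p = sp i j" using spos_surj by blast
    show "(mulv m (Wmat N EI a b) x p - mulv N (Hmat N EI) (mulv m (Hbar N EI) x) p)\<^sup>2 \<le> 4 * disagr x"
      unfolding p mulv_Wmat_spos[OF ij] mulv_H_Hbar_spos[OF ij] using avg_est_mean_sq_le[OF ij] .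
  qed
  then show ?thesis by simp
qed

definition pair_disagr :: "(nat \<Rightarrow> real) \<Rightarrow> nat \<Rightarrow> nat \<Rightarrow> real" where
  "pair_disagr x a b = 1/2 * (\<Sum>l\<in>ind N EI a b. (x (sp a l) - x (sp b l))\<^sup>2)"

definition comm_disagr :: "(nat \<Rightarrow> real) \<Rightarrow> real" where
  "comm_disagr x = (\<Sum>a\<in>V. \<Sum>b\<in>nbC a. pair_disagr x a b)"

lemma pair_disagr_nonneg: "pair_disagr x a b \<ge> 0" unfolding pair_disagr_def by (intro mult_nonneg_nonneg sum_nonneg) auto

lemma pair_disagr_ge: "l \<in> ind N EI a b \<Longrightarrow> (x (sp a l) - x (sp b l))\<^sup>2 \<le> 2 * pair_disagr x a b"
proof -
  assume l: "l \<in> ind N EI a b"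
  have "(x (sp a l) - x (sp b l))\<^sup>2 \<le> (\<Sum>l\<in>ind N EI a b. (x (sp a l) - x (sp b l))\<^sup>2)"
    using l by (intro member_le_sum) auto
  then show ?thesis unfolding pair_disagr_def by simp
qed

lemma pair_disagr_le_comm_disagr: "(a,b) \<in> EC \<Longrightarrow> pair_disagr x a b \<le> comm_disagr x"
proof -
  assume e: "(a,b) \<in> EC"
  then have aV: "a \<in> V" and b: "b \<in> nbC a" using EC_in_V nbC_iff by auto
  have "pair_disagr x a b \<le> (\<Sum>b\<in>nbC a. pair_disagr x a b)" using b by (intro member_le_sum pair_disagr_nonneg) auto
  also have "\<dots> \<le> comm_disagr x" unfolding comm_disagr_def using aV by (intro member_le_sum sum_nonneg pair_disagr_nonneg) auto
  finally show ?thesis .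
qed

lemma Em_simple: "simple_graph N Em" using Em_max_tri_free unfolding max_tri_free_spanning_def by auto
lemma Em_subset_EI: "Em \<subseteq> EI" using Em_max_tri_free unfolding max_tri_free_spanning_def by auto

lemma non_Em_edge_triangle: "(i,j) \<in> EI \<Longrightarrow> (i,j) \<notin> Em \<Longrightarrow> \<exists>c. (i,c) \<in> Em \<and> (c,j) \<in> Em"
proof -
  assume ij: "(i,j) \<in> EI" "(i,j) \<notin> Em"
  have tf: "triangle_free Em" and symE: "sym Em" and nl: "\<And>u. (u,u) \<notin> Em"
    using Em_max_tri_free Em_simple unfolding max_tri_free_spanning_def simple_graph_def by auto
  have neq: "i \<noteq> j" using ij EI_irrefl by auto
  have "\<not> triangle_free (Em \<union> {(i,j),(j,i)})" using Em_max_tri_free ij unfolding max_tri_free_spanning_def by auto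
  then obtain a b c where e: "(a,b) \<in> Em \<union> {(i,j),(j,i)}" "(b,c) \<in> Em \<union> {(i,j),(j,i)}" "(a,c) \<in> Em \<union> {(i,j),(j,i)}"
    unfolding triangle_free_def by blast
  have s: "\<And>u v. (u,v) \<in> Em \<Longrightarrow> (v,u) \<in> Em" using symE by (meson symD)
  have nt: "\<not> ((a,b) \<in> Em \<and> (b,c) \<in> Em \<and> (a,c) \<in> Em)" using tf unfolding triangle_free_def by blast
  show ?thesis
  proof (cases "(a,b) \<in> Em")
    case ab: True
    show ?thesis
    proof (cases "(b,c) \<in> Em")
      case bc: True
      then have "(a,c) \<in> {(i,j),(j,i)}" using nt ab e(3) by blast
      then show ?thesis using ab bc s by auto
    next
      case bc: False
      then have bc': "(b,c) \<in> {(i,j),(j,i)}" using e(2) by blast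
      then have "(a,c) \<in> Em" using e(3) neq nl ab by auto
      then show ?thesis using ab bc' s by auto
    qed
  next
    case ab: False
    then have ab': "(a,b) \<in> {(i,j),(j,i)}" using e(1) by blast
    then have bc: "(b,c) \<in> Em" using e(2) e(3) neq nl by auto
    then have "(a,c) \<in> Em" using e(3) ab' neq nl by auto
    then show ?thesis using ab' bc s by auto
  qed
qed

lemma disagr_term_le_comm_disagr: "i \<in> V \<Longrightarrow> j \<in> nbI i
    \<Longrightarrow> (x (sp i j) - x (sp j j))\<^sup>2 \<le> 8 * comm_disagr x"
proof -
  assume iV: "i \<in> V" and j: "j \<in> nbI i"
  have eI: "(i,j) \<in> EI" using j nbI_iff by auto
  have jV: "j \<in> V" using j nbI_subset[of i] by auto
  have Q0: "comm_disagr x \<ge> 0" unfolding comm_disagr_def by (intro sum_nonneg pair_disagr_nonneg)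
  show ?thesis
  proof (cases "(j,i) \<in> EC")
    case True
    have "j \<in> ind N EI j i" unfolding ind_def NtI_def using j nbI_sym[of j i] by auto
    then have "(x (sp j j) - x (sp i j))\<^sup>2 \<le> 2 * pair_disagr x j i" by (rule pair_disagr_ge)
    also have "\<dots> \<le> 2 * comm_disagr x" using pair_disagr_le_comm_disagr[OF True] by simp
    finally show ?thesis using Q0 by (simp add: power2_commute)
  next
    case False
    \<comment> \<open>By maximality of Em, the edge (i,j) closes a triangle with two edges of Em \<subseteq> EC.\<close>
    then have "(i,j) \<notin> EC" using EC_sym by blast
    then have "(i,j) \<notin> Em" using Em_subset_EC by blast
    then obtain c where c: "(i,c) \<in> Em" "(c,j) \<in> Em" using non_Em_edge_triangle eI by blast
    have cEC: "(i,c) \<in> EC" "(c,j) \<in> EC" using c Em_subset_EC by auto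
    have cj: "j \<in> nbI c" using c Em_subset_EI nbI_iff by auto
    have j1: "j \<in> ind N EI i c" unfolding ind_def NtI_def using j cj by auto
    have j2: "j \<in> ind N EI c j" unfolding ind_def NtI_def using cj by auto
    have "(x (sp i j) - x (sp j j))\<^sup>2 \<le> 2 * (x (sp i j) - x (sp c j))\<^sup>2 + 2 * (x (sp c j) - x (sp j j))\<^sup>2"
      using diff_square_le_weighted[of 1 "x (sp i j) - x (sp c j)" "x (sp j j) - x (sp c j)"]
      by (simp add: power2_commute)
    also have "\<dots> \<le> 2 * (2 * pair_disagr x i c) + 2 * (2 * pair_disagr x c j)"
      using pair_disagr_ge[OF j1, of x] pair_disagr_ge[OF j2, of x] by linarith
    also have "\<dots> \<le> 8 * comm_disagr x" using pair_disagr_le_comm_disagr[OF cEC(1), of x] pair_disagr_le_comm_disagr[OF cEC(2), of x] by linarith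
    finally show ?thesis .
  qed
qed

lemma disagr_le_comm_disagr: "disagr x \<le> 8 * real N ^ 2 * comm_disagr x"
proof -
  have Q0: "comm_disagr x \<ge> 0" unfolding comm_disagr_def by (intro sum_nonneg pair_disagr_nonneg)
  have "disagr x \<le> (\<Sum>i\<in>V. \<Sum>j\<in>nbI i. 8 * comm_disagr x)"
    unfolding disagr_def by (intro sum_mono disagr_term_le_comm_disagr) auto
  also have "\<dots> = (\<Sum>i\<in>V. real (card (nbI i)) * (8 * comm_disagr x))" by simp
  also have "\<dots> \<le> (\<Sum>i\<in>V. real N * (8 * comm_disagr x))"
    using card_nbI_le Q0 by (intro sum_mono mult_right_mono) auto
  also have "\<dots> = 8 * real N ^ 2 * comm_disagr x" by (simp add: power2_eq_square)
  finally show ?thesis .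
qed

lemma avg_pair_gain:
  assumes "a \<in> V" "b \<in> V" "a \<noteq> b" "j \<in> ind N EI a b"
  shows "1/2 * (x (sp a j) - x (sp b j))\<^sup>2 \<le>
   (if j = a then 0 else (x (sp a j) - x (sp j j))\<^sup>2 - (gossip_avg a b x a j - x (sp j j))\<^sup>2) +
   (if j = b then 0 else (x (sp b j) - x (sp j j))\<^sup>2 - (gossip_avg a b x b j - x (sp j j))\<^sup>2)"
proof -
  have avg: "gossip_avg a b x a j = (x (sp a j) + x (sp b j)) / 2" "gossip_avg a b x b j = (x (sp a j) + x (sp b j)) / 2"
    unfolding gossip_avg_def using assms by auto
  have "0 \<le> (x (sp a j) - x (sp b j))\<^sup>2" by simp
  then show ?thesis
    unfolding avg using assms(3) by (cases "j = a"; cases "j = b") (auto simp: power2_eq_square field_simps)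
qed

lemma disagr_avg_le: "a \<in> V \<Longrightarrow> b \<in> V \<Longrightarrow> a \<noteq> b \<Longrightarrow>
  (\<Sum>i\<in>V. \<Sum>j\<in>nbI i. (gossip_avg a b x i j - x (sp j j))\<^sup>2) \<le> disagr x - pair_disagr x a b"
proof -
  assume a: "a \<in> V" "b \<in> V" "a \<noteq> b"
  let ?I = "ind N EI a b"
  define D where "D i j = (x (sp i j) - x (sp j j))\<^sup>2 - (gossip_avg a b x i j - x (sp j j))\<^sup>2" for i j
  define D' where "D' i j = (if j = i then 0 else D i j)" for i j
  have D0: "D i j = 0" if "i \<noteq> a" "i \<noteq> b" for i j
    unfolding D_def gossip_avg_def using that by simp
  have D0': "D i j = 0" if "j \<notin> ?I" for i j
    unfolding D_def gossip_avg_def using that by simp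
  have diff: "disagr x - (\<Sum>i\<in>V. \<Sum>j\<in>nbI i. (gossip_avg a b x i j - x (sp j j))\<^sup>2) = (\<Sum>i\<in>V. \<Sum>j\<in>nbI i. D i j)"
    unfolding disagr_def D_def by (simp add: sum_subtractf)
  have s1: "(\<Sum>i\<in>V. \<Sum>j\<in>nbI i. D i j) = (\<Sum>i\<in>{a,b}. \<Sum>j\<in>nbI i. D i j)"
    using a by (intro sum.mono_neutral_right) (auto simp: D0)
  also have "\<dots> = (\<Sum>j\<in>nbI a. D a j) + (\<Sum>j\<in>nbI b. D b j)" using a by simp
  finally have s2: "(\<Sum>i\<in>V. \<Sum>j\<in>nbI i. D i j) = (\<Sum>j\<in>nbI a. D a j) + (\<Sum>j\<in>nbI b. D b j)" .
  have s3: "(\<Sum>j\<in>nbI i. D i j) = (\<Sum>j\<in>?I. D' i j)" if i: "i = a \<or> i = b" for i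
  proof -
    have "(\<Sum>j\<in>nbI i. D i j) = (\<Sum>j\<in>nbI i. D' i j)" unfolding D'_def using nbI_irrefl[of i] by (intro sum.cong) auto
    also have "\<dots> = (\<Sum>j\<in>nbtI i. D' i j)" unfolding NtI_def using nbI_irrefl[of i] by (simp add: D'_def)
    also have "\<dots> = (\<Sum>j\<in>?I. D' i j)"
    proof (rule sum.mono_neutral_right)
      show "?I \<subseteq> nbtI i" using i ind_subset by blast
      show "\<forall>j\<in>nbtI i - ?I. D' i j = 0" unfolding D'_def using D0' by auto
    qed simp
    finally show ?thesis .
  qed
  have "pair_disagr x a b = (\<Sum>j\<in>?I. 1/2 * (x (sp a j) - x (sp b j))\<^sup>2)" unfolding pair_disagr_def by (simp add: sum_distrib_left)
  also have "\<dots> \<le> (\<Sum>j\<in>?I. D' a j + D' b j)"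
    using avg_pair_gain[OF a] unfolding D'_def D_def by (intro sum_mono) auto
  also have "\<dots> = (\<Sum>i\<in>V. \<Sum>j\<in>nbI i. D i j)" unfolding s2 s3[of a, simplified] s3[of b, simplified] by (simp add: sum.distrib)
  finally show ?thesis using diff by linarith
qed

lemma V_nonempty: "V \<noteq> {}" using N_ge_2 by auto

lemma nbC_nonempty: "a \<in> V \<Longrightarrow> nbC a \<noteq> {}"
proof -
  assume aV: "a \<in> V"
  obtain b where bV: "b \<in> V" and ba: "b \<noteq> a"
  proof (cases "a = 1")
    case True then show ?thesis using that[of 2] N_ge_2 by auto
  next
    case False then show ?thesis using that[of 1] N_ge_2 aV by auto
  qed
  have "(a,b) \<in> EI\<^sup>*" using EI_connected aV bV unfolding graph_connected_def by blast
  then obtain c where c: "(a,c) \<in> EI" using ba by (cases rule: converse_rtranclE) auto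
  show ?thesis
  proof (cases "(a,c) \<in> Em")
    case True then have "c \<in> nbC a" using Em_subset_EC nbC_iff by auto
    then show ?thesis by auto
  next
    case False
    then obtain c' where "(a,c') \<in> Em" using non_Em_edge_triangle c by blast
    then have "c' \<in> nbC a" using Em_subset_EC nbC_iff by auto
    then show ?thesis by auto
  qed
qed

lemma card_nbC_pos: "a \<in> V \<Longrightarrow> card (nbC a) > 0"
  using nbC_nonempty by (simp add: card_gt_0_iff)

abbreviation Pm :: "(nat \<times> nat) pmf" where "Pm \<equiv> pair_pmf N EC"

lemma set_pair_pmf: "p \<in> set_pmf Pm \<Longrightarrow> p \<in> EC"
proof -
  assume p: "p \<in> set_pmf Pm"
  then obtain a where a: "a \<in> V" and pa: "p \<in> set_pmf (map_pmf (\<lambda>j. (a,j)) (pmf_of_set (nbC a)))"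
    unfolding pair_pmf_def using V_nonempty by (auto simp: set_bind_pmf)
  then have "p \<in> (\<lambda>j. (a,j)) ` nbC a" using nbC_nonempty[OF a] by (simp add: set_map_pmf)
  then show ?thesis using nbC_iff by auto
qed

lemma AE_pair_pmf: "AE p in measure_pmf Pm. p \<in> EC"
  using set_pair_pmf by (simp add: AE_measure_pmf_iff)

definition pair_mean :: "(nat \<times> nat \<Rightarrow> real) \<Rightarrow> real" where
  "pair_mean f = (\<Sum>a\<in>V. (\<Sum>b\<in>nbC a. f (a,b)) / real (card (nbC a))) / real N"

lemma nn_integral_pair_pmf: "(\<And>a b. a \<in> V \<Longrightarrow> b \<in> nbC a \<Longrightarrow> f (a,b) \<ge> 0) \<Longrightarrow>
  (\<integral>\<^sup>+p. ennreal (f p) \<partial>measure_pmf Pm) = ennreal (pair_mean f)"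
proof -
  assume f0: "\<And>a b. a \<in> V \<Longrightarrow> b \<in> nbC a \<Longrightarrow> f (a,b) \<ge> 0"
  have Npos: "real N > 0" using N_ge_2 by simp
  have inner: "(\<integral>\<^sup>+j. ennreal (f (a,j)) \<partial>measure_pmf (pmf_of_set (nbC a)))
      = ennreal ((\<Sum>b\<in>nbC a. f (a,b)) / real (card (nbC a)))" if a: "a \<in> V" for a
  proof -
    have "(\<integral>\<^sup>+j. ennreal (f (a,j)) \<partial>measure_pmf (pmf_of_set (nbC a)))
        = (\<Sum>b\<in>nbC a. ennreal (f (a,b))) / of_nat (card (nbC a))"
      by (rule nn_integral_pmf_of_set[OF nbC_nonempty[OF a]]) simp
    also have "(\<Sum>b\<in>nbC a. ennreal (f (a,b))) = ennreal (\<Sum>b\<in>nbC a. f (a,b))"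
      using f0[OF a] by (rule sum_ennreal)
    also have "ennreal (\<Sum>b\<in>nbC a. f (a,b)) / of_nat (card (nbC a)) = ennreal ((\<Sum>b\<in>nbC a. f (a,b)) / real (card (nbC a)))"
      unfolding ennreal_of_nat_eq_real_of_nat
      using card_nbC_pos[OF a] f0[OF a] by (intro divide_ennreal) (auto intro: sum_nonneg)
    finally show ?thesis .
  qed
  have nn: "(\<Sum>b\<in>nbC a. f (a,b)) / real (card (nbC a)) \<ge> 0" if "a \<in> V" for a
    using f0[OF that] by (intro divide_nonneg_nonneg sum_nonneg) auto
  have "(\<integral>\<^sup>+p. ennreal (f p) \<partial>measure_pmf Pm) =
      (\<integral>\<^sup>+a. (\<integral>\<^sup>+j. ennreal (f (a,j)) \<partial>measure_pmf (pmf_of_set (nbC a))) \<partial>measure_pmf (pmf_of_set V))"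
    unfolding pair_pmf_def by simp
  also have "\<dots> = (\<Sum>a\<in>V. (\<integral>\<^sup>+j. ennreal (f (a,j)) \<partial>measure_pmf (pmf_of_set (nbC a)))) / of_nat (card V)"
    by (rule nn_integral_pmf_of_set[OF V_nonempty]) simp
  also have "\<dots> = (\<Sum>a\<in>V. ennreal ((\<Sum>b\<in>nbC a. f (a,b)) / real (card (nbC a)))) / of_nat N"
    using inner by simp
  also have "(\<Sum>a\<in>V. ennreal ((\<Sum>b\<in>nbC a. f (a,b)) / real (card (nbC a)))) =
      ennreal (\<Sum>a\<in>V. (\<Sum>b\<in>nbC a. f (a,b)) / real (card (nbC a)))"
    using nn by (rule sum_ennreal)
  also have "ennreal (\<Sum>a\<in>V. (\<Sum>b\<in>nbC a. f (a,b)) / real (card (nbC a))) / of_nat N = ennreal (pair_mean f)"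
    unfolding ennreal_of_nat_eq_real_of_nat pair_mean_def
    using Npos nn by (intro divide_ennreal) (auto intro: sum_nonneg)
  finally show ?thesis .
qed

lemma pair_mean_nonneg: "(\<And>p. f p \<ge> 0) \<Longrightarrow> pair_mean f \<ge> 0"
  unfolding pair_mean_def by (intro divide_nonneg_nonneg sum_nonneg) auto

lemma pair_mean_affine: "pair_mean (\<lambda>p. c0 + c1 * f p + c2 * g p) = c0 + c1 * pair_mean f + c2 * pair_mean g"
proof -
  have Npos: "real N > 0" using N_ge_2 by simp
  have inner: "(\<Sum>b\<in>nbC a. c0 + c1 * f (a,b) + c2 * g (a,b)) / real (card (nbC a)) =
     c0 + c1 * ((\<Sum>b\<in>nbC a. f (a,b)) / real (card (nbC a))) + c2 * ((\<Sum>b\<in>nbC a. g (a,b)) / real (card (nbC a)))"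
    if a: "a \<in> V" for a
  proof -
    have cp: "real (card (nbC a)) > 0" using card_nbC_pos[OF a] by simp
    have "(\<Sum>b\<in>nbC a. c0 + c1 * f (a,b) + c2 * g (a,b))
        = real (card (nbC a)) * c0 + c1 * (\<Sum>b\<in>nbC a. f (a,b)) + c2 * (\<Sum>b\<in>nbC a. g (a,b))"
      by (simp add: sum.distrib sum_distrib_left)
    then show ?thesis using cp nbC_nonempty[OF a] by (simp add: add_divide_distrib)
  qed
  have "pair_mean (\<lambda>p. c0 + c1 * f p + c2 * g p)
      = (\<Sum>a\<in>V. c0 + c1 * ((\<Sum>b\<in>nbC a. f (a,b)) / real (card (nbC a))) + c2 * ((\<Sum>b\<in>nbC a. g (a,b)) / real (card (nbC a)))) / real N"
    unfolding pair_mean_def using inner by simp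
  also have "\<dots> = (real N * c0 + c1 * (\<Sum>a\<in>V. (\<Sum>b\<in>nbC a. f (a,b)) / real (card (nbC a))) + c2 * (\<Sum>a\<in>V. (\<Sum>b\<in>nbC a. g (a,b)) / real (card (nbC a)))) / real N"
    by (simp add: sum.distrib sum_distrib_left)
  also have "\<dots> = c0 + c1 * pair_mean f + c2 * pair_mean g" unfolding pair_mean_def using Npos by (simp add: field_simps)
  finally show ?thesis .
qed

lemma pair_mean_pair_disagr_ge: "pair_mean (\<lambda>p. pair_disagr x (fst p) (snd p)) \<ge> comm_disagr x / real N ^ 2"
proof -
  have Npos: "real N > 0" using N_ge_2 by simp
  have t: "(\<Sum>b\<in>nbC a. pair_disagr x a b) / real N \<le> (\<Sum>b\<in>nbC a. pair_disagr x a b) / real (card (nbC a))" if a: "a \<in> V" for a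
  proof -
    have "real (card (nbC a)) \<le> real N" using card_nbC_le by simp
    moreover have "real (card (nbC a)) > 0" using card_nbC_pos[OF a] by simp
    moreover have "(\<Sum>b\<in>nbC a. pair_disagr x a b) \<ge> 0" by (intro sum_nonneg pair_disagr_nonneg)
    ultimately show ?thesis by (intro divide_left_mono) auto
  qed
  have "comm_disagr x / real N ^ 2 = (\<Sum>a\<in>V. (\<Sum>b\<in>nbC a. pair_disagr x a b) / real N) / real N"
    unfolding comm_disagr_def by (simp add: sum_divide_distrib power2_eq_square)
  also have "\<dots> \<le> (\<Sum>a\<in>V. (\<Sum>b\<in>nbC a. pair_disagr x a b) / real (card (nbC a))) / real N"
    using t Npos by (intro divide_right_mono sum_mono) auto
  also have "\<dots> = pair_mean (\<lambda>p. pair_disagr x (fst p) (snd p))" unfolding pair_mean_def by simp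
  finally show ?thesis .
qed

definition rho :: real where "rho = 1 / (8 * real N ^ 4)"

lemma rho_pos: "rho > 0" unfolding rho_def using N_ge_2 by simp

lemma rho_le_1: "rho \<le> 1"
proof -
  have "(1::real) \<le> real N ^ 4" using N_ge_2 by (intro one_le_power) simp
  then have "(1::real) \<le> 8 * real N ^ 4" by linarith
  then show ?thesis unfolding rho_def by (auto simp: divide_le_eq_1)
qed

lemma pair_mean_pair_disagr_ge_disagr: "pair_mean (\<lambda>p. pair_disagr x (fst p) (snd p)) \<ge> rho * disagr x"
proof -
  have "rho * disagr x \<le> rho * (8 * real N ^ 2 * comm_disagr x)"
    using disagr_le_comm_disagr rho_pos by (simp add: mult_left_mono)
  also have "\<dots> = comm_disagr x / real N ^ 2"
    unfolding rho_def using N_ge_2 by (simp add: field_simps power2_eq_square eval_nat_numeral)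
  also have "\<dots> \<le> pair_mean (\<lambda>p. pair_disagr x (fst p) (snd p))" by (rule pair_mean_pair_disagr_ge)
  finally show ?thesis .
qed

end

section \<open>One step of the algorithm\<close>

locale gossip_game = gossip_graphs +
  fixes Om :: "nat \<Rightarrow> real set" and grad :: "nat \<Rightarrow> (nat \<Rightarrow> real) \<Rightarrow> real" and G :: real
  assumes Om: "\<And>i. i \<in> {1..N} \<Longrightarrow> Om i \<noteq> {} \<and> closed (Om i) \<and> convex (Om i)"
    and grad_bound: "\<And>i y. i \<in> {1..N} \<Longrightarrow> y \<in> Omega_loc N EI Om i \<Longrightarrow> \<bar>grad i y\<bar> \<le> G"
begin

definition feasible :: "(nat \<Rightarrow> real) \<Rightarrow> bool" where
  "feasible x \<longleftrightarrow> (\<forall>i\<in>V. \<forall>j\<in>nbtI i. x (sp i j) \<in> Om j)"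

abbreviation xbar :: "nat \<Rightarrow> nat \<Rightarrow> (nat \<Rightarrow> real) \<Rightarrow> nat \<Rightarrow> real" where
  "xbar a b x \<equiv> mulv m (Wmat N EI a b) x"

definition local_profile :: "nat \<Rightarrow> nat \<Rightarrow> (nat \<Rightarrow> real) \<Rightarrow> nat \<Rightarrow> nat \<Rightarrow> real" where
  "local_profile a b x i = (\<lambda>j. if j = i then x (sp i i) else if j \<in> nbI i then xbar a b x (sp i j) else 0)"

lemma gstep_own_entry: "i \<in> V \<Longrightarrow> gstep N EI Om grad \<alpha> (a,b) x (sp i i) =
   (if i = a \<or> i = b then closest_point (Om i) (x (sp i i) - \<alpha> i * grad i (local_profile a b x i)) else x (sp i i))"
proof -
  assume iV: "i \<in> V"
  have ex: "\<exists>i'\<in>V. sp i i = sp i' i'" using iV by blast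
  have th: "(THE i'. i' \<in> V \<and> sp i i = sp i' i') = i"
  proof (rule the_equality)
    show "i \<in> V \<and> sp i i = sp i i" using iV by simp
    fix i' assume "i' \<in> V \<and> sp i i = sp i' i'"
    then show "i' = i" using spos_inj[OF iV self_in_nbtI, of i' i'] self_in_nbtI by auto
  qed
  show ?thesis unfolding gstep_def Let_def fst_conv snd_conv th using ex by (simp add: local_profile_def)
qed

lemma gstep_other_entry: "i \<in> V \<Longrightarrow> j \<in> nbI i
    \<Longrightarrow> gstep N EI Om grad \<alpha> (a,b) x (sp i j) = xbar a b x (sp i j)"
proof -
  assume iV: "i \<in> V" and j: "j \<in> nbI i"
  have jt: "j \<in> nbtI i" using j unfolding NtI_def by simp
  have "\<not> (\<exists>i'\<in>V. sp i j = sp i' i')"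
  proof
    assume "\<exists>i'\<in>V. sp i j = sp i' i'"
    then obtain i' where "i' \<in> V" "sp i j = sp i' i'" by blast
    then have "i = i' \<and> j = i'" using spos_inj[OF iV jt, of i' i'] self_in_nbtI by auto
    then show False using j nbI_irrefl by auto
  qed
  then show ?thesis unfolding gstep_def Let_def by simp
qed

lemma feasible_avg_entry: "feasible x \<Longrightarrow> i \<in> V \<Longrightarrow> j \<in> nbtI i \<Longrightarrow> xbar a b x (sp i j) \<in> Om j"
proof -
  assume v: "feasible x" and ij: "i \<in> V" "j \<in> nbtI i"
  have jV: "j \<in> V" using ij nbtI_subset by blast
  show ?thesis
  proof (cases "a \<in> V \<and> b \<in> V \<and> a \<noteq> b \<and> (i = a \<or> i = b) \<and> j \<in> ind N EI a b")
    case True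
    then have ja: "j \<in> nbtI a" and jb: "j \<in> nbtI b" and aV: "a \<in> V" and bV: "b \<in> V"
      using ind_subset(1)[of a b] ind_subset(2)[of a b] by auto
    have u: "x (sp a j) \<in> Om j" "x (sp b j) \<in> Om j" using v ja jb aV bV unfolding feasible_def by auto
    have "(1/2::real) *\<^sub>R x (sp a j) + (1/2::real) *\<^sub>R x (sp b j) \<in> Om j"
      by (rule convexD) (use Om[OF jV] u in auto)
    moreover have "(x (sp a j) + x (sp b j)) / 2 = (1/2::real) *\<^sub>R x (sp a j) + (1/2::real) *\<^sub>R x (sp b j)"
      by simp
    ultimately have "(x (sp a j) + x (sp b j)) / 2 \<in> Om j" by metis
    then show ?thesis unfolding mulv_Wmat_spos[OF ij] gossip_avg_def using True by simp
  next
    case False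
    then show ?thesis unfolding mulv_Wmat_spos[OF ij] gossip_avg_def using v ij unfolding feasible_def by auto
  qed
qed

lemma feasible_gstep: "feasible x \<Longrightarrow> feasible (gstep N EI Om grad \<alpha> ab x)"
proof -
  assume v: "feasible x"
  obtain a b where ab: "ab = (a,b)" by (cases ab)
  show ?thesis unfolding feasible_def ab
  proof (intro ballI)
    fix i j assume iV: "i \<in> V" and j: "j \<in> nbtI i"
    show "gstep N EI Om grad \<alpha> (a, b) x (sp i j) \<in> Om j"
    proof (cases "j = i")
      case True
      then show ?thesis unfolding True gstep_own_entry[OF iV]
        using closest_point_in_set[OF conjunct1[OF conjunct2[OF Om[OF iV]]]] Om[OF iV] v iV self_in_nbtI unfolding feasible_def by auto
    next
      case False
      then have "j \<in> nbI i" using j nbtI_iff by auto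
      then show ?thesis unfolding gstep_other_entry[OF iV \<open>j \<in> nbI i\<close>] using feasible_avg_entry[OF v iV j] by simp
    qed
  qed
qed

lemma feasible_gstate: "feasible x0 \<Longrightarrow> feasible (gstate N EI Om grad x0 \<omega> k)"
  by (induction k) (auto intro: feasible_gstep)

lemma local_profile_in_Omega_loc: "feasible x \<Longrightarrow> i \<in> V \<Longrightarrow> local_profile a b x i \<in> Omega_loc N EI Om i"
proof -
  assume v: "feasible x" and iV: "i \<in> V"
  have 1: "\<forall>j\<in>nbtI i. local_profile a b x i j \<in> Om j"
  proof
    fix j assume j: "j \<in> nbtI i"
    show "local_profile a b x i j \<in> Om j"
    proof (cases "j = i")
      case True
      have "x (sp i i) \<in> Om i" using v iV self_in_nbtI unfolding feasible_def by blast
      then show ?thesis using True unfolding local_profile_def by simp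
    next
      case False
      then have "j \<in> nbI i" using j nbtI_iff by blast
      then show ?thesis using False feasible_avg_entry[OF v iV j] unfolding local_profile_def by simp
    qed
  qed
  have 2: "\<forall>j. j \<notin> nbtI i \<longrightarrow> local_profile a b x i j = 0"
    unfolding local_profile_def using nbtI_iff by auto
  show ?thesis unfolding Omega_loc_def using 1 2 by blast
qed

lemma gstep_own_drift: "feasible x \<Longrightarrow> j \<in> V \<Longrightarrow> (\<forall>i. \<alpha> i \<ge> 0) \<Longrightarrow>
  \<bar>gstep N EI Om grad \<alpha> (a,b) x (sp j j) - x (sp j j)\<bar> \<le> (if j = a \<or> j = b then \<alpha> j * G else 0)"
proof -
  assume v: "feasible x" and jV: "j \<in> V" and al: "\<forall>i. \<alpha> i \<ge> 0"
  show ?thesis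
  proof (cases "j = a \<or> j = b")
    case True
    let ?z = "x (sp j j)" and ?g = "grad j (local_profile a b x j)"
    have z: "?z \<in> Om j" using v jV self_in_nbtI unfolding feasible_def by auto
    have "\<bar>closest_point (Om j) (?z - \<alpha> j * ?g) - ?z\<bar> = dist (closest_point (Om j) (?z - \<alpha> j * ?g)) (closest_point (Om j) ?z)"
      using closest_point_self[OF z] by (simp add: dist_real_def)
    also have "\<dots> \<le> dist (?z - \<alpha> j * ?g) ?z"
      using closest_point_lipschitz Om[OF jV] conjunct1[OF conjunct2[OF Om[OF jV]]] by blast
    also have "\<dots> = \<alpha> j * \<bar>?g\<bar>" using al by (simp add: dist_real_def abs_mult)
    also have "\<dots> \<le> \<alpha> j * G" using grad_bound[OF jV local_profile_in_Omega_loc[OF v jV]] al by (simp add: mult_left_mono)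
    finally show ?thesis unfolding gstep_own_entry[OF jV] using True by simp
  next
    case False
    then show ?thesis unfolding gstep_own_entry[OF jV] by simp
  qed
qed

lemma sum_own_drift_sq_le:
  assumes x: "feasible x" and ab: "(a,b) \<in> EC" and \<alpha>: "\<forall>i. \<alpha> i \<ge> 0"
  shows "(\<Sum>j\<in>V. (gstep N EI Om grad \<alpha> (a,b) x (sp j j) - x (sp j j))\<^sup>2)
      \<le> (\<alpha> a * G)\<^sup>2 + (\<alpha> b * G)\<^sup>2"
proof -
  define eta where "eta j = (if j = a \<or> j = b then \<alpha> j * G else 0)" for j
  have aV: "a \<in> V" and bV: "b \<in> V" and "a \<noteq> b" using ab EC_in_V EC_irrefl by auto
  have "(\<Sum>j\<in>V. (gstep N EI Om grad \<alpha> (a,b) x (sp j j) - x (sp j j))\<^sup>2) \<le> (\<Sum>j\<in>V. (eta j)\<^sup>2)"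
  proof (intro sum_mono)
    fix j assume "j \<in> V"
    then have "\<bar>gstep N EI Om grad \<alpha> (a,b) x (sp j j) - x (sp j j)\<bar> \<le> eta j"
      unfolding eta_def using gstep_own_drift[OF x _ \<alpha>] by blast
    then show "(gstep N EI Om grad \<alpha> (a,b) x (sp j j) - x (sp j j))\<^sup>2 \<le> (eta j)\<^sup>2"
      by (metis abs_ge_zero power2_abs power_mono)
  qed
  also have "(\<Sum>j\<in>V. (eta j)\<^sup>2) = (\<Sum>j\<in>{a,b}. (eta j)\<^sup>2)"
    using aV bV unfolding eta_def by (intro sum.mono_neutral_right) auto
  also have "\<dots> = (\<alpha> a * G)\<^sup>2 + (\<alpha> b * G)\<^sup>2" using \<open>a \<noteq> b\<close> unfolding eta_def by simp
  finally show ?thesis .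
qed

lemma disagr_gstep_le:
  assumes x: "feasible x" and ab: "(a,b) \<in> EC" and \<alpha>: "\<forall>i. \<alpha> i \<ge> 0" and \<epsilon>: "\<epsilon> > 0"
  shows "disagr (gstep N EI Om grad \<alpha> (a,b) x) \<le> (1 + \<epsilon>) * (disagr x - pair_disagr x a b)
     + (1 + 1/\<epsilon>) * real N * ((\<alpha> a * G)\<^sup>2 + (\<alpha> b * G)\<^sup>2)"
proof -
  let ?x' = "gstep N EI Om grad \<alpha> (a,b) x"
  define u where "u i j = gossip_avg a b x i j - x (sp j j)" for i j
  define d where "d j = ?x' (sp j j) - x (sp j j)" for j
  have aV: "a \<in> V" and bV: "b \<in> V" and "a \<noteq> b" using ab EC_in_V EC_irrefl by auto
  have x'_diff: "?x' (sp i j) - ?x' (sp j j) = u i j - d j" if "i \<in> V" "j \<in> nbI i" for i j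
    using that nbtI_iff unfolding u_def d_def gstep_other_entry[OF that] by (simp add: mulv_Wmat_spos)
  have "disagr ?x' = (\<Sum>i\<in>V. \<Sum>j\<in>nbI i. (u i j - d j)\<^sup>2)"
    unfolding disagr_def using x'_diff by (intro sum.cong refl) auto
  also have "\<dots> \<le> (\<Sum>i\<in>V. \<Sum>j\<in>nbI i. (1 + \<epsilon>) * (u i j)\<^sup>2 + (1 + 1/\<epsilon>) * (d j)\<^sup>2)"
    using diff_square_le_weighted[OF \<epsilon>] by (intro sum_mono) auto
  also have "\<dots> = (1 + \<epsilon>) * (\<Sum>i\<in>V. \<Sum>j\<in>nbI i. (u i j)\<^sup>2) + (1 + 1/\<epsilon>) * (\<Sum>i\<in>V. \<Sum>j\<in>nbI i. (d j)\<^sup>2)"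
    by (simp add: sum.distrib sum_distrib_left)
  also have "(\<Sum>i\<in>V. \<Sum>j\<in>nbI i. (u i j)\<^sup>2) \<le> disagr x - pair_disagr x a b"
    unfolding u_def using disagr_avg_le[OF aV bV \<open>a \<noteq> b\<close>] .
  also have "(\<Sum>i\<in>V. \<Sum>j\<in>nbI i. (d j)\<^sup>2) \<le> (\<Sum>i\<in>V. (\<alpha> a * G)\<^sup>2 + (\<alpha> b * G)\<^sup>2)"
  proof (intro sum_mono)
    fix i assume "i \<in> V"
    have "(\<Sum>j\<in>nbI i. (d j)\<^sup>2) \<le> (\<Sum>j\<in>V. (d j)\<^sup>2)" using nbI_subset by (intro sum_mono2) auto
    also have "\<dots> \<le> (\<alpha> a * G)\<^sup>2 + (\<alpha> b * G)\<^sup>2" unfolding d_def by (rule sum_own_drift_sq_le[OF x ab \<alpha>])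
    finally show "(\<Sum>j\<in>nbI i. (d j)\<^sup>2) \<le> (\<alpha> a * G)\<^sup>2 + (\<alpha> b * G)\<^sup>2" .
  qed
  finally show ?thesis using \<epsilon> by (simp add: mult_left_mono)
qed

end

section \<open>Expected disagreement along the iteration\<close>

locale gossip_run = gossip_game +
  fixes x0 :: "nat \<Rightarrow> real"
  assumes x0_feasible: "feasible x0"
begin

abbreviation Mp :: "(nat \<Rightarrow> nat \<times> nat) measure" where "Mp \<equiv> PiM UNIV (\<lambda>_. measure_pmf Pm)"
abbreviation st :: "(nat \<Rightarrow> nat \<times> nat) \<Rightarrow> nat \<Rightarrow> nat \<Rightarrow> real" where
  "st \<omega> k \<equiv> gstate N EI Om grad x0 \<omega> k"

lemma pairs_space_eq: "pairs_space N EC = Mp" unfolding pairs_space_def by simp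

lemma prob_space_Mp: "prob_space Mp"
  by (rule prob_space_PiM) (simp add: prob_space_measure_pmf)

definition step_sq :: "(nat \<Rightarrow> nat \<times> nat) \<Rightarrow> nat \<Rightarrow> real" where
  "step_sq \<omega> k = (1 / real (nu \<omega> k (fst (\<omega> k))))\<^sup>2 + (1 / real (nu \<omega> k (snd (\<omega> k))))\<^sup>2"

lemma step_sq_nonneg: "step_sq \<omega> k \<ge> 0" unfolding step_sq_def by simp

lemma nu_dep: "(\<forall>l\<le>k. \<omega> l = \<omega>' l) \<Longrightarrow> nu \<omega> k i = nu \<omega>' k i"
  unfolding nu_def by (intro arg_cong[where f=card]) auto

lemma gstate_dep: "(\<forall>l<k. \<omega> l = \<omega>' l) \<Longrightarrow> st \<omega> k = st \<omega>' k"
proof (induction k)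
  case (Suc k)
  then have "st \<omega> k = st \<omega>' k" and "\<omega> k = \<omega>' k" by auto
  moreover have "(\<lambda>i. 1 / real (nu \<omega> k i)) = (\<lambda>i. 1 / real (nu \<omega>' k i))"
    using nu_dep[of k \<omega> \<omega>'] Suc.prems by auto
  ultimately show ?case by simp
qed simp

lemma step_sq_dep: "(\<forall>l<Suc k. \<omega> l = \<omega>' l) \<Longrightarrow> step_sq \<omega> k = step_sq \<omega>' k"
  unfolding step_sq_def using nu_dep[of k \<omega> \<omega>'] by (auto simp: less_Suc_eq_le)

definition eps :: real where "eps = rho / 2"
definition contraction :: real where "contraction = (1 + eps) * (1 - rho)"
definition drift_const :: real where "drift_const = (1 + 1 / eps) * real N * G\<^sup>2"

lemma eps_pos: "eps > 0" unfolding eps_def using rho_pos by simp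

lemma contraction_nonneg: "contraction \<ge> 0"
  unfolding contraction_def using eps_pos rho_le_1 by simp

lemma contraction_less_1: "contraction < 1"
proof -
  have "contraction = 1 - rho / 2 - rho * rho / 2" unfolding contraction_def eps_def by (simp add: field_simps)
  then show ?thesis using rho_pos mult_pos_pos[OF rho_pos rho_pos] by linarith
qed

lemma drift_const_nonneg: "drift_const \<ge> 0" unfolding drift_const_def using eps_pos by simp

lemma disagr_next_le:
  assumes "p \<in> EC"
  shows "disagr (st (fun_upd \<omega> k p) (Suc k)) \<le>
    (1 + eps) * (disagr (st \<omega> k) - pair_disagr (st \<omega> k) (fst p) (snd p)) + drift_const * step_sq (fun_upd \<omega> k p) k"
proof -
  obtain a b where p: "p = (a,b)" by (cases p)
  let ?\<omega> = "fun_upd \<omega> k p"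
  let ?\<alpha> = "\<lambda>i. 1 / real (nu ?\<omega> k i)"
  have "st ?\<omega> k = st \<omega> k" by (rule gstate_dep) simp
  then have "st ?\<omega> (Suc k) = gstep N EI Om grad ?\<alpha> (a,b) (st \<omega> k)" using p by simp
  then have "disagr (st ?\<omega> (Suc k)) = disagr (gstep N EI Om grad ?\<alpha> (a,b) (st \<omega> k))" by simp
  also have "\<dots> \<le> (1 + eps) * (disagr (st \<omega> k) - pair_disagr (st \<omega> k) a b)
     + (1 + 1/eps) * real N * ((?\<alpha> a * G)\<^sup>2 + (?\<alpha> b * G)\<^sup>2)"
    using assms unfolding p by (intro disagr_gstep_le feasible_gstate x0_feasible eps_pos) simp_all
  also have "(1 + 1/eps) * real N * ((?\<alpha> a * G)\<^sup>2 + (?\<alpha> b * G)\<^sup>2) = drift_const * step_sq ?\<omega> k"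
    unfolding step_sq_def drift_const_def p by (simp add: power_mult_distrib power_divide field_simps)
  finally show ?thesis unfolding p fst_conv snd_conv .
qed

lemma pair_mean_disagr_next_le:
  "pair_mean (\<lambda>p. (1 + eps) * (disagr x - pair_disagr x (fst p) (snd p)) + drift_const * h p)
     \<le> contraction * disagr x + drift_const * pair_mean h"
proof -
  have "pair_mean (\<lambda>p. (1 + eps) * (disagr x - pair_disagr x (fst p) (snd p)) + drift_const * h p)
      = (1 + eps) * disagr x + (- (1 + eps)) * pair_mean (\<lambda>p. pair_disagr x (fst p) (snd p)) + drift_const * pair_mean h"
    using pair_mean_affine[of "(1 + eps) * disagr x" "- (1 + eps)" "\<lambda>p. pair_disagr x (fst p) (snd p)" drift_const h]
    by (simp add: algebra_simps)
  also have "\<dots> \<le> contraction * disagr x + drift_const * pair_mean h"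
    using mult_left_mono[OF pair_mean_pair_disagr_ge_disagr[of x], of "1 + eps"] eps_pos
    unfolding contraction_def by (simp add: algebra_simps)
  finally show ?thesis .
qed

lemma nn_integral_disagr_next_le:
  "(\<integral>\<^sup>+p. ennreal (disagr (st (fun_upd \<omega> k p) (Suc k))) \<partial>measure_pmf Pm) \<le>
   ennreal contraction * ennreal (disagr (st \<omega> k))
   + ennreal drift_const * (\<integral>\<^sup>+p. ennreal (step_sq (fun_upd \<omega> k p) k) \<partial>measure_pmf Pm)"
proof -
  let ?x = "st \<omega> k" and ?h = "\<lambda>p. step_sq (fun_upd \<omega> k p) k"
  define F where "F p = (1 + eps) * (disagr ?x - pair_disagr ?x (fst p) (snd p)) + drift_const * ?h p" for p
  have le: "disagr (st (fun_upd \<omega> k p) (Suc k)) \<le> F p" if "p \<in> EC" for p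
    unfolding F_def using disagr_next_le[OF that] .
  have "(\<integral>\<^sup>+p. ennreal (disagr (st (fun_upd \<omega> k p) (Suc k))) \<partial>measure_pmf Pm) \<le> (\<integral>\<^sup>+p. ennreal (F p) \<partial>measure_pmf Pm)"
    using AE_pair_pmf by (intro nn_integral_mono_AE) (auto elim!: eventually_mono intro!: ennreal_leI le simp del: gstate.simps)
  also have "\<dots> = ennreal (pair_mean F)"
    using le disagr_nonneg order_trans nbC_iff by (intro nn_integral_pair_pmf) blast
  also have "\<dots> \<le> ennreal (contraction * disagr ?x + drift_const * pair_mean ?h)"
    unfolding F_def by (intro ennreal_leI pair_mean_disagr_next_le)
  also have "\<dots> = ennreal contraction * ennreal (disagr ?x) + ennreal drift_const * ennreal (pair_mean ?h)"
    using contraction_nonneg drift_const_nonneg disagr_nonneg pair_mean_nonneg[OF step_sq_nonneg]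
    by (simp add: ennreal_plus ennreal_mult)
  also have "ennreal (pair_mean ?h) = (\<integral>\<^sup>+p. ennreal (?h p) \<partial>measure_pmf Pm)"
    by (rule nn_integral_pair_pmf[symmetric]) (rule step_sq_nonneg)
  finally show ?thesis .
qed

end

context gossip_run
begin

definition mean_disagr :: "nat \<Rightarrow> ennreal" where
  "mean_disagr k = (\<integral>\<^sup>+\<omega>. ennreal (disagr (st \<omega> k)) \<partial>Mp)"

definition mean_step_sq :: "nat \<Rightarrow> ennreal" where
  "mean_step_sq k = (\<integral>\<^sup>+\<omega>. ennreal (step_sq \<omega> k) \<partial>Mp)"

lemma measurable_disagr_gstate: "(\<lambda>\<omega>. ennreal (disagr (st \<omega> k))) \<in> borel_measurable Mp"
  by (rule measurable_PiM_pmf_prefix[of k]) (metis gstate_dep, simp)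

lemma measurable_step_sq: "(\<lambda>\<omega>. ennreal (step_sq \<omega> k)) \<in> borel_measurable Mp"
  by (rule measurable_PiM_pmf_prefix[of "Suc k"]) (metis step_sq_dep, simp)

lemma mean_disagr_Suc_le: "mean_disagr (Suc k) \<le> ennreal contraction * mean_disagr k + ennreal drift_const * mean_step_sq k"
proof -
  let ?h = "\<lambda>\<omega>. \<integral>\<^sup>+p. ennreal (step_sq (fun_upd \<omega> k p) k) \<partial>measure_pmf Pm"
  have h_meas: "?h \<in> borel_measurable Mp"
  proof (rule measurable_PiM_pmf_prefix[of k])
    fix \<omega> \<omega>' :: "nat \<Rightarrow> nat \<times> nat" assume "\<forall>l<k. \<omega> l = \<omega>' l"
    then show "?h \<omega> = ?h \<omega>'"
      by (intro nn_integral_cong arg_cong[where f=ennreal] step_sq_dep) (auto simp: less_Suc_eq)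
  qed simp
  have "mean_disagr (Suc k)
      = (\<integral>\<^sup>+\<omega>. (\<integral>\<^sup>+p. ennreal (disagr (st (fun_upd \<omega> k p) (Suc k))) \<partial>measure_pmf Pm) \<partial>Mp)"
    unfolding mean_disagr_def by (rule nn_integral_PiM_pmf_last) (metis gstate_dep)
  also have "\<dots> \<le> (\<integral>\<^sup>+\<omega>. ennreal contraction * ennreal (disagr (st \<omega> k)) + ennreal drift_const * ?h \<omega> \<partial>Mp)"
    by (intro nn_integral_mono nn_integral_disagr_next_le)
  also have "\<dots> = ennreal contraction * mean_disagr k + ennreal drift_const * (\<integral>\<^sup>+\<omega>. ?h \<omega> \<partial>Mp)"
    unfolding mean_disagr_def using measurable_disagr_gstate h_meas
    by (simp add: nn_integral_add nn_integral_cmult)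
  also have "(\<integral>\<^sup>+\<omega>. ?h \<omega> \<partial>Mp) = mean_step_sq k"
    unfolding mean_step_sq_def by (rule nn_integral_PiM_pmf_last[symmetric]) (metis step_sq_dep)
  finally show ?thesis .
qed

lemma AE_pairs_in_EC: "AE \<omega> in Mp. \<forall>k. \<omega> k \<in> EC"
proof -
  have "AE \<omega> in Mp. \<omega> k \<in> EC" for k
    by (rule AE_PiM_component) (simp_all add: prob_space_measure_pmf AE_pair_pmf)
  then show ?thesis by (simp add: AE_all_countable)
qed

lemma step_sq_eq_sum:
  assumes "\<omega> k \<in> EC"
  shows "step_sq \<omega> k = (\<Sum>i\<in>V. if fst (\<omega> k) = i \<or> snd (\<omega> k) = i then (1 / real (nu \<omega> k i))\<^sup>2 else 0)"
proof -
  obtain a b where ab: "\<omega> k = (a,b)" by (cases "\<omega> k")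
  have "a \<in> V" "b \<in> V" "a \<noteq> b" using assms ab EC_in_V EC_irrefl by auto
  then have "(\<Sum>i\<in>V. if a = i \<or> b = i then (1 / real (nu \<omega> k i))\<^sup>2 else 0)
      = (\<Sum>i\<in>{a,b}. (1 / real (nu \<omega> k i))\<^sup>2)"
    by (intro sum.mono_neutral_cong_right) auto
  then show ?thesis using \<open>a \<noteq> b\<close> unfolding step_sq_def ab by simp
qed

text \<open>Player \<open>i\<close> is updated exactly at the iterations where it is drawn, and there
  its step size is the reciprocal of its update count, so its squared step sizes run
  through the inverse squares.\<close>
lemma sum_step_sq_le:
  assumes "\<forall>k. \<omega> k \<in> EC"
  shows "(\<Sum>k<n. step_sq \<omega> k) \<le> real N * (pi\<^sup>2 / 6)"
proof -
  have "(\<Sum>k<n. step_sq \<omega> k) =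
      (\<Sum>k<n. \<Sum>i\<in>V. if fst (\<omega> k) = i \<or> snd (\<omega> k) = i then (1 / real (nu \<omega> k i))\<^sup>2 else 0)"
    using assms step_sq_eq_sum by simp
  also have "\<dots> = (\<Sum>i\<in>V. \<Sum>k<n. if fst (\<omega> k) = i \<or> snd (\<omega> k)
      = i then (1 / real (nu \<omega> k i))\<^sup>2 else 0)"
    by (rule sum.swap)
  also have "\<dots> \<le> (\<Sum>i\<in>V. pi\<^sup>2 / 6)"
    unfolding nu_def sum_inverse_squares_of_counts by (intro sum_mono sum_inverse_squares_le)
  finally show ?thesis by simp
qed

lemma suminf_mean_step_sq_finite: "(\<Sum>k. mean_step_sq k) \<noteq> \<infinity>"
proof -
  have "(\<Sum>k<n. mean_step_sq k) \<le> ennreal (real N * (pi\<^sup>2 / 6))" for n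
  proof -
    have "(\<Sum>k<n. mean_step_sq k) = (\<integral>\<^sup>+\<omega>. ennreal (\<Sum>k<n. step_sq \<omega> k) \<partial>Mp)"
      unfolding mean_step_sq_def using measurable_step_sq step_sq_nonneg
      by (simp add: nn_integral_sum[symmetric] sum_ennreal)
    also have "\<dots> \<le> (\<integral>\<^sup>+\<omega>. ennreal (real N * (pi\<^sup>2 / 6)) \<partial>Mp)"
      using AE_pairs_in_EC by (intro nn_integral_mono_AE) (auto elim!: eventually_mono intro!: ennreal_leI sum_step_sq_le simp del: times_divide_eq_right)
    also have "\<dots> = ennreal (real N * (pi\<^sup>2 / 6))"
      using prob_space.emeasure_space_1[OF prob_space_Mp] by simp
    finally show ?thesis .
  qed
  then have "(\<Sum>k. mean_step_sq k) \<le> ennreal (real N * (pi\<^sup>2 / 6))"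
    unfolding suminf_eq_SUP by (intro SUP_least) auto
  then show ?thesis by (auto simp: top_unique)
qed

lemma suminf_mean_disagr_finite: "(\<Sum>k. mean_disagr k) \<noteq> \<infinity>"
proof (rule suminf_finite_of_contractive_recursion)
  show "mean_disagr 0 \<noteq> \<infinity>"
    unfolding mean_disagr_def using prob_space.emeasure_space_1[OF prob_space_Mp] by simp
  show "(\<Sum>k. ennreal drift_const * mean_step_sq k) \<noteq> \<infinity>"
    using suminf_mean_step_sq_finite by (simp add: ennreal_mult_eq_top_iff)
qed (use contraction_nonneg contraction_less_1 mean_disagr_Suc_le in auto)

definition cons_err :: "(nat \<Rightarrow> nat \<times> nat) \<Rightarrow> nat \<Rightarrow> real" where
  "cons_err \<omega> k = normsq m (\<lambda>p. mulv m (Wmat N EI (fst (\<omega> k)) (snd (\<omega> k))) (st \<omega> k) p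
        - mulv N (Hmat N EI) (mulv m (Hbar N EI) (st \<omega> k)) p)"

lemma measurable_cons_err: "(\<lambda>\<omega>. ennreal (cons_err \<omega> k)) \<in> borel_measurable Mp"
proof (rule measurable_PiM_pmf_prefix[of "Suc k"])
  fix \<omega> \<omega>' :: "nat \<Rightarrow> nat \<times> nat" assume "\<forall>l<Suc k. \<omega> l = \<omega>' l"
  then show "ennreal (cons_err \<omega> k) = ennreal (cons_err \<omega>' k)"
    unfolding cons_err_def using gstate_dep[of k \<omega> \<omega>'] by simp
qed simp

lemma suminf_nn_integral_cons_err_finite: "(\<Sum>k. \<integral>\<^sup>+\<omega>. ennreal (cons_err \<omega> k) \<partial>Mp) \<noteq> \<infinity>"
proof -
  have "(\<integral>\<^sup>+\<omega>. ennreal (cons_err \<omega> k) \<partial>Mp) \<le> ennreal (4 * real m) * mean_disagr k" for k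
  proof -
    have "(\<integral>\<^sup>+\<omega>. ennreal (cons_err \<omega> k) \<partial>Mp)
        \<le> (\<integral>\<^sup>+\<omega>. ennreal (4 * real m) * ennreal (disagr (st \<omega> k)) \<partial>Mp)"
      using consensus_error_le disagr_nonneg unfolding cons_err_def
      by (intro nn_integral_mono) (simp add: ennreal_mult[symmetric] ennreal_leI algebra_simps)
    then show ?thesis
      unfolding mean_disagr_def using measurable_disagr_gstate by (simp add: nn_integral_cmult)
  qed
  then have "(\<Sum>k. \<integral>\<^sup>+\<omega>. ennreal (cons_err \<omega> k) \<partial>Mp) \<le> (\<Sum>k. ennreal (4 * real m) * mean_disagr k)"
    by (intro suminf_le) auto
  also have "\<dots> = ennreal (4 * real m) * (\<Sum>k. mean_disagr k)" by simp
  also have "\<dots> < \<infinity>"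
    using suminf_mean_disagr_finite by (simp add: ennreal_mult_less_top less_top)
  finally show ?thesis by simp
qed

end

theorem lemma8:
  fixes N :: nat and EI EC Em :: "(nat \<times> nat) set"
    and Om :: "nat \<Rightarrow> real set"
    and J :: "nat \<Rightarrow> (nat \<Rightarrow> real) \<Rightarrow> real"
    and grad :: "nat \<Rightarrow> (nat \<Rightarrow> real) \<Rightarrow> real"
    and x0 :: "nat \<Rightarrow> real"
  assumes N2: "N \<ge> 2"
    and GI: "simple_graph N EI" "graph_connected N EI" "\<not> graph_complete N EI"
    and Gm: "max_tri_free_spanning N EI Em"
    and GC: "simple_graph N EC" "Em \<subseteq> EC" "EC \<subseteq> EI"
    and Om: "\<And>i. i \<in> {1..N} \<Longrightarrow> Om i \<noteq> {} \<and> compact (Om i) \<and> convex (Om i)"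
    and Jcont: "\<And>i. i \<in> {1..N} \<Longrightarrow> continuous_on (Omega_loc N EI Om i) (J i)"
    and Jdiff: "\<And>i y. i \<in> {1..N} \<Longrightarrow> y \<in> Omega_loc N EI Om i \<Longrightarrow>
                  ((\<lambda>t. J i (y(i := t))) has_real_derivative grad i y) (at (y i) within Om i)"
    and gradcont: "\<And>i. i \<in> {1..N} \<Longrightarrow> continuous_on (Omega_loc N EI Om i) (grad i)"
    and Jconv: "\<And>i y. i \<in> {1..N} \<Longrightarrow> y \<in> Omega_loc N EI Om i \<Longrightarrow>
                  convex_on (Om i) (\<lambda>t. J i (y(i := t)))"
    and x0: "\<And>i j. i \<in> {1..N} \<Longrightarrow> j \<in> NtI N EI i \<Longrightarrow> x0 (spos N EI i j) \<in> Om j"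
  shows "AE \<omega> in pairs_space N EC.
           (\<Sum>k. nn_cond_exp (pairs_space N EC) (Mfield N EC k)
              (\<lambda>\<omega>'. ennreal (normsq (mtot N EI)
                 (\<lambda>p. mulv (mtot N EI) (Wmat N EI (fst (\<omega>' k)) (snd (\<omega>' k)))
                        (gstate N EI Om grad x0 \<omega>' k) p
                      - mulv N (Hmat N EI) (mulv (mtot N EI) (Hbar N EI) (gstate N EI Om grad x0 \<omega>' k)) p)))
              \<omega>) < \<infinity>"
proof -
  \<comment> \<open>Of the cost functions only the continuity of grad matters here (it bounds the gradient
    steps).\<close>
  interpret gossip_graphs N EI EC Em
    using N2 GI Gm GC by unfold_locales
  have "compact (Omega_loc N EI Om i)" if "i \<in> V" for i
    using Om nbtI_subset[OF that] by (intro compact_Omega_loc) auto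
  then obtain G where G: "\<And>i y. i \<in> V \<Longrightarrow> y \<in> Omega_loc N EI Om i \<Longrightarrow> \<bar>grad i y\<bar> \<le> G"
    using uniform_bound_on_compacts[of V "Omega_loc N EI Om" grad] gradcont by auto
  interpret gossip_game N EI EC Em Om grad G
    using Om G by unfold_locales (auto simp: compact_imp_closed)
  interpret gossip_run N EI EC Em Om grad G x0
    using x0 by unfold_locales (auto simp: feasible_def)
  have "AE \<omega> in pairs_space N EC.
      (\<Sum>k. nn_cond_exp (pairs_space N EC) (Mfield N EC k) (\<lambda>\<omega>'. ennreal (cons_err \<omega>' k)) \<omega>) < \<infinity>"
    by (rule AE_suminf_nn_cond_exp_finite[OF sigma_finite_subalgebra_Mfield])
      (use suminf_nn_integral_cons_err_finite in \<open>simp_all add: pairs_space_eq measurable_cons_err\<close>)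
  then show ?thesis unfolding cons_err_def .
qed

end
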